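(* Under the setting in the context, $$n^{-2}\Big(\sum_{k=1}^nV_k^2-\frac{\langle\overline{\mathbf V}_{\boldsymbol\xi}\tilde{\mathbf u},\tilde{\mathbf u}\rangle}{4\alpha\beta}\sum_{k=1}^nU_{k-1}\Big)\to0$$ in probability as $n\to\infty$.
   Context: Setting: $\mathbf X_k=(X_{k,1},X_{k,2})^\top$, $\mathbf X_0=\mathbf 0$, and for $k\in\mathbb N$, $\mathbf X_k=\sum_{j=1}^{X_{k-1,1}}\boldsymbol\xi_{k,j,1}+\sum_{j=1}^{X_{k-1,2}}\boldsymbol\xi_{k,j,2}+\boldsymbol\varepsilon_k$, where $\{\boldsymbol\xi_{k,j,i},\boldsymbol\varepsilon_k:k,j\in\mathbb N,i\in\{1,2\}\}$ are independent $\mathbb Z_+^2$-valued random vectors and each of the families $\{\boldsymbol\xi_{k,j,1}\}$, $\{\boldsymbol\xi_{k,j,2}\}$, $\{\boldsymbol\varepsilon_k\}$ is identically distributed. $\mathbb E\boldsymbol\xi_{1,1,1}=(\alpha,\beta)^\top$, $\mathbb E\boldsymbol\xi_{1,1,2}=(\beta,\alpha)^\top$, with $(\alpha,\beta)\in(0,1)^2$, $\alpha+\beta=1$. Assume $\mathbb E\|\boldsymbol\xi_{1,1,1}\|^8,\mathbb E\|\boldsymbol\xi_{1,1,2}\|^8,\mathbb E\|\boldsymbol\varepsilon_1\|^8<\infty$ and $\mathbb E\boldsymbol\varepsilon_1\neq\mathbf 0$. $\mathbf V_{\boldsymbol\xi_i}=\operatorname{Var}(\boldsymbol\xi_{1,1,i})$,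 $\overline{\mathbf V}_{\boldsymbol\xi}=\frac12(\mathbf V_{\boldsymbol\xi_1}+\mathbf V_{\boldsymbol\xi_2})$, $\mathbf 1=(1,1)^\top$, $\tilde{\mathbf u}=(1,-1)^\top$, $U_k=\langle\mathbf 1,\mathbf X_k\rangle=X_{k,1}+X_{k,2}$, $V_k=\langle\tilde{\mathbf u},\mathbf X_k\rangle=X_{k,1}-X_{k,2}$. *)

theory Defs
  imports "HOL-Probability.Probability"
begin

text \<open>Random vectors with values in Z_+^2 are modelled as functions into nat^2.\<close>

definition vreal :: "nat^2 \<Rightarrow> real^2" where
  "vreal x = (\<chi> i. real (x $ i))"

text \<open>Index set of the independent family: XiI k j i is xi_{k,j,i}, EpsI k is eps_k.\<close>
datatype noise_idx = XiI nat nat nat | EpsI nat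

definition noise_indices :: "noise_idx set" where
  "noise_indices = {XiI k j i | k j i. k \<ge> 1 \<and> j \<ge> 1 \<and> i \<in> {1,2}} \<union> {EpsI k | k. k \<ge> 1}"

definition noise_family ::
  "(nat \<Rightarrow> nat \<Rightarrow> 'a \<Rightarrow> nat^2) \<Rightarrow> (nat \<Rightarrow> nat \<Rightarrow> 'a \<Rightarrow> nat^2) \<Rightarrow> (nat \<Rightarrow> 'a \<Rightarrow> nat^2)
    \<Rightarrow> noise_idx \<Rightarrow> 'a \<Rightarrow> nat^2" where
  "noise_family xi1 xi2 eps idx = (case idx of
      XiI k j i \<Rightarrow> (if i = 1 then xi1 k j else xi2 k j)
    | EpsI k \<Rightarrow> eps k)"

fun bpi :: "(nat \<Rightarrow> nat \<Rightarrow> 'a \<Rightarrow> nat^2) \<Rightarrow> (nat \<Rightarrow> nat \<Rightarrow> 'a \<Rightarrow> nat^2) \<Rightarrow> (nat \<Rightarrow> 'a \<Rightarrow> nat^2)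
    \<Rightarrow> nat \<Rightarrow> 'a \<Rightarrow> nat^2" where
  "bpi xi1 xi2 eps 0 \<omega> = 0"
| "bpi xi1 xi2 eps (Suc k) \<omega> =
     (\<Sum>j\<in>{1..bpi xi1 xi2 eps k \<omega> $ 1}. xi1 (Suc k) j \<omega>)
   + (\<Sum>j\<in>{1..bpi xi1 xi2 eps k \<omega> $ 2}. xi2 (Suc k) j \<omega>)
   + eps (Suc k) \<omega>"

definition var_mat :: "'a measure \<Rightarrow> ('a \<Rightarrow> real^'n) \<Rightarrow> real^'n^'n" where
  "var_mat M Y = (\<chi> a b. integral\<^sup>L M (\<lambda>\<omega>.
      (Y \<omega> $ a - (integral\<^sup>L M Y) $ a) * (Y \<omega> $ b - (integral\<^sup>L M Y) $ b)))"

definition conv_prob_zero :: "'a measure \<Rightarrow> (nat \<Rightarrow> 'a \<Rightarrow> real) \<Rightarrow> bool" where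
  "conv_prob_zero M Z \<longleftrightarrow>
     (\<forall>e>0. (\<lambda>n. measure M {\<omega> \<in> space M. \<bar>Z n \<omega>\<bar> > e}) \<longlonglongrightarrow> 0)"

end

theory Submission
  imports Defs
begin

text \<open>
  Write U_k and V_k for the total size X_k1 + X_k2 and the imbalance X_k1 - X_k2. Given X_(k-1),
  the next generation is a sum of X_(k-1)1 + X_(k-1)2 + 1 independent terms, so
  V_k = \<lambda> V_(k-1) + \<delta> + D_k with \<lambda> = \<alpha> - \<beta>, \<delta> = E (\<epsilon>_11 - \<epsilon>_12) and a martingale
  difference D_k whose conditional variance \<sigma>(X_(k-1)) is affine in U_(k-1) and V_(k-1).
  Squaring and summing expresses (1 - \<lambda>^2) times the bracket of the theorem as
  - \<lambda>^2 V_n^2 + c \<Sum>_(k<n) V_k + n c' + 2 \<Sum> A_k D_k + \<Sum> (D_k^2 - \<sigma>(X_(k-1))) with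
  A_k = \<lambda> V_(k-1) + \<delta>: the constant of the theorem is exactly the one that cancels the U_(k-1)
  part of \<sigma>. The last two sums have orthogonal summands. Since E U_k^2 = O(k^2), and
  E V_k^4 = O(k^2) because v \<mapsto> \<lambda> v + \<delta> is a contraction (|\<lambda>| < 1), every term has second
  moment O(n^3), and Chebyshev's inequality gives convergence in probability at rate 1/n.
\<close>

lemma power4_add_le: "((x::real) + y) ^ 4 \<le> 8 * (x ^ 4 + y ^ 4)"
proof -
  have "(x + y)^2 \<le> 2 * (x^2 + y^2)"
    using sum_squares_ge_zero[of "x - y" 0] by (simp add: power2_eq_square algebra_simps)
  then have "((x + y)^2)^2 \<le> (2 * (x^2 + y^2))^2" by (rule power_mono) simp
  moreover have "(2 * (x^2 + y^2))^2 \<le> 8 * (x^4 + y^4)"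
    using zero_le_power2[of "x^2 - y^2"] by (simp add: power2_eq_square power4_eq_xxxx algebra_simps)
  ultimately show ?thesis by simp
qed

lemma abs_mult_le_half_squares: "\<bar>(x::real) * y\<bar> \<le> (x^2 + y^2) / 2"
  using zero_le_power2[of "\<bar>x\<bar> - \<bar>y\<bar>"] by (simp add: power2_eq_square algebra_simps abs_mult)

lemma abs_mult4_le_sum_power4: "\<bar>(a::real) * b * c * d\<bar> \<le> a^4 + b^4 + c^4 + d^4"
proof -
  have half: "((x^2 + y^2) / 2)^2 \<le> (x^4 + y^4) / 2" for x y :: real
    using zero_le_power2[of "x^2 - y^2"] by (simp add: power2_eq_square power4_eq_xxxx field_simps)
  have "\<bar>a * b * c * d\<bar> = \<bar>a * b\<bar> * \<bar>c * d\<bar>" by (simp add: abs_mult)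
  also have "\<dots> \<le> ((a^2 + b^2) / 2) * ((c^2 + d^2) / 2)"
    by (intro mult_mono abs_mult_le_half_squares) auto
  also have "\<dots> \<le> (((a^2 + b^2) / 2)^2 + ((c^2 + d^2) / 2)^2) / 2"
    using abs_mult_le_half_squares[of "(a^2 + b^2) / 2" "(c^2 + d^2) / 2"] by simp
  also have "\<dots> \<le> ((a^4 + b^4) / 2 + (c^4 + d^4) / 2) / 2"
    by (intro divide_right_mono add_mono half) simp
  also have "\<dots> \<le> a^4 + b^4 + c^4 + d^4"
    by (simp add: field_simps)
  finally show ?thesis .
qed

lemma affine_moments_le_square:
  fixes x1 x2 r1 r2 re q1 q2 qe :: real
  assumes "0 \<le> x1" "0 \<le> x2" "0 \<le> r1" "0 \<le> r2" "0 \<le> re" "0 \<le> q1" "0 \<le> q2" "0 \<le> qe"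
  shows "x1 * r1 + x2 * r2 + re + 3 * (x1 * q1 + x2 * q2 + qe)^2
    \<le> (r1 + r2 + re + 3 * (q1 + q2 + qe)^2) * (x1 + x2 + 1)^2"
proof -
  define s where "s = x1 + x2 + 1"
  have s: "1 \<le> s" "x1 \<le> s" "x2 \<le> s" "s \<le> s^2" using assms by (auto simp: s_def power2_eq_square)
  have "re \<le> s * re" using s(1) assms(5) by (simp add: mult_le_cancel_right1)
  then have "x1 * r1 + x2 * r2 + re \<le> s * r1 + s * r2 + s * re"
    using s assms by (intro add_mono mult_right_mono) auto
  also have "\<dots> \<le> s^2 * (r1 + r2 + re)"
    using s assms by (simp add: distrib_left[symmetric] mult_right_mono)
  finally have r: "x1 * r1 + x2 * r2 + re \<le> s^2 * (r1 + r2 + re)" .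
  have "qe \<le> s * qe" using s(1) assms(8) by (simp add: mult_le_cancel_right1)
  then have "x1 * q1 + x2 * q2 + qe \<le> s * (q1 + q2 + qe)"
    using s assms by (simp add: distrib_left add_mono mult_right_mono)
  then have "(x1 * q1 + x2 * q2 + qe)^2 \<le> (s * (q1 + q2 + qe))^2"
    using assms by (intro power_mono) auto
  then have q: "(x1 * q1 + x2 * q2 + qe)^2 \<le> s^2 * (q1 + q2 + qe)^2"
    by (simp add: power_mult_distrib)
  have "(r1 + r2 + re + 3 * (q1 + q2 + qe)^2) * s^2 = s^2 * (r1 + r2 + re) + 3 * (s^2 * (q1 + q2 + qe)^2)"
    by (simp add: algebra_simps)
  with r q show ?thesis
    unfolding s_def[symmetric] by linarith
qed

lemma power4_add_le_weighted:
  fixes a d \<eta> :: real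
  assumes "0 < \<eta>"
  shows "(a + d) ^ 4 \<le> (1 + \<eta>) * a ^ 4 + 4 * (a ^ 3 * d) + (3 + 16 / \<eta>) * d ^ 4"
proof -
  have expand: "(a + d) ^ 4 = a ^ 4 + 4 * (a ^ 3 * d) + 6 * (a^2 * d^2) + 4 * (a * d^3) + d ^ 4"
    by (simp add: power2_eq_square power3_eq_cube power4_eq_xxxx algebra_simps)
  have "2 * (a * d^3) \<le> a^2 * d^2 + d^4"
    using zero_le_power2[of "a * d - d^2"] by (simp add: power2_eq_square power3_eq_cube power4_eq_xxxx algebra_simps)
  moreover have "8 * (a^2 * d^2) \<le> \<eta> * a^4 + (16 / \<eta>) * d^4"
  proof -
    have "\<eta> * (8 * (a^2 * d^2)) \<le> \<eta> * (\<eta> * a^4 + (16 / \<eta>) * d^4)"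
      using zero_le_power2[of "\<eta> * a^2 - 4 * d^2"] assms
      by (simp add: power2_eq_square power4_eq_xxxx algebra_simps)
    then show ?thesis using assms by (simp add: mult_le_cancel_left_pos)
  qed
  ultimately show ?thesis unfolding expand by (simp add: algebra_simps)
qed

lemma power4_affine_le:
  fixes a c v :: real
  assumes "\<bar>a\<bar> < 1"
  shows "(a * v + c) ^ 4 \<le> ((1 + \<bar>a\<bar>) / 2) ^ 4 * v ^ 4 + (2 * \<bar>c\<bar> / (1 - \<bar>a\<bar>)) ^ 4"
proof -
  define R where "R = 2 * \<bar>c\<bar> / (1 - \<bar>a\<bar>)"
  have pos: "0 < 1 - \<bar>a\<bar>" using assms by simp
  have tri: "\<bar>a * v + c\<bar> \<le> \<bar>a\<bar> * \<bar>v\<bar> + \<bar>c\<bar>" by (metis abs_mult abs_triangle_ineq)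
  have c: "2 * \<bar>c\<bar> = R * (1 - \<bar>a\<bar>)" using pos by (simp add: R_def)
  have power4: "x ^ 4 \<le> y ^ 4" if "\<bar>x\<bar> \<le> y" for x y :: real
    using power_mono[OF that, of 4] by (simp add: power_even_abs_numeral)
  consider "\<bar>a * v + c\<bar> \<le> (1 + \<bar>a\<bar>) / 2 * \<bar>v\<bar>" | "\<bar>a * v + c\<bar> \<le> R"
  proof (cases "R \<le> \<bar>v\<bar>")
    case True
    then have "R * (1 - \<bar>a\<bar>) \<le> \<bar>v\<bar> * (1 - \<bar>a\<bar>)" using pos by (intro mult_right_mono) auto
    then have "\<bar>a * v + c\<bar> \<le> (1 + \<bar>a\<bar>) / 2 * \<bar>v\<bar>" using tri c by (auto simp: field_simps)
    then show ?thesis using that by blast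
  next
    case False
    then have "\<bar>a\<bar> * \<bar>v\<bar> \<le> \<bar>a\<bar> * R" by (intro mult_left_mono) auto
    moreover have "2 * \<bar>c\<bar> = R - \<bar>a\<bar> * R" using c by (simp add: algebra_simps)
    ultimately have "\<bar>a * v + c\<bar> \<le> R" using tri by linarith
    then show ?thesis using that by blast
  qed
  then show ?thesis
  proof cases
    case 1
    have "((1 + \<bar>a\<bar>) / 2 * \<bar>v\<bar>) ^ 4 = ((1 + \<bar>a\<bar>) / 2) ^ 4 * v ^ 4"
      by (simp only: power_mult_distrib power_even_abs_numeral even_numeral)
    then have "(a * v + c) ^ 4 \<le> ((1 + \<bar>a\<bar>) / 2) ^ 4 * v ^ 4"
      using power4[OF 1] by simp
    moreover have "0 \<le> R ^ 4" by simp
    ultimately show ?thesis unfolding R_def[symmetric] by linarith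
  next
    case 2
    then have "(a * v + c) ^ 4 \<le> R ^ 4" by (rule power4)
    moreover have "0 \<le> ((1 + \<bar>a\<bar>) / 2) ^ 4 * v ^ 4" by simp
    ultimately show ?thesis unfolding R_def[symmetric] by linarith
  qed
qed

lemma quadratic_bound_of_contraction:
  fixes x :: "nat \<Rightarrow> real"
  assumes "x 0 \<le> 0" "0 \<le> q" "q < 1" "0 \<le> K" "\<And>k. x (Suc k) \<le> q * x k + K * real (Suc k) ^ 2"
  shows "x k \<le> K / (1 - q) * real k ^ 2"
proof (induction k)
  case (Suc k)
  have "q * x k \<le> q * (K / (1 - q) * real (Suc k) ^ 2)"
    using Suc.IH assms(2-4) by (intro mult_left_mono order.trans[OF Suc.IH] mult_left_mono power_mono) auto
  also have "\<dots> + K * real (Suc k) ^ 2 = K / (1 - q) * real (Suc k) ^ 2"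
    using assms(3) by (simp add: field_simps)
  finally show ?case using assms(5)[of k] by linarith
qed (use assms(1) in simp)

lemma sum_shift_down:
  fixes f :: "nat \<Rightarrow> 'b::comm_monoid_add"
  shows "(\<Sum>k=1..n. f (k - 1)) = (\<Sum>k<n. f k)"
  by (induction n) (simp_all add: add.commute)

lemma quadratic_form_diagonal_difference:
  "((P :: real^2^2) *v vector [1, -1]) \<bullet> vector [1, -1] = P$1$1 - P$1$2 - P$2$1 + P$2$2"
  by (simp add: matrix_vector_mult_def inner_vec_def sum_2 algebra_simps)

section \<open>Fourth moments, independent sums and second-moment growth\<close>

context prob_space
begin

definition L4 :: "('a \<Rightarrow> real) \<Rightarrow> bool" where
  "L4 f \<longleftrightarrow> f \<in> borel_measurable M \<and> integrable M (\<lambda>x. f x ^ 4)"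

lemma L4_integrable_power:
  assumes "L4 f" "k \<le> 4"
  shows "integrable M (\<lambda>x. f x ^ k)"
proof (rule Bochner_Integration.integrable_bound[of _ "\<lambda>x. 1 + f x ^ 4"])
  show "integrable M (\<lambda>x. 1 + f x ^ 4)" "(\<lambda>x. f x ^ k) \<in> borel_measurable M"
    using assms by (auto simp: L4_def)
  have "\<bar>f x\<bar> ^ k \<le> 1 + \<bar>f x\<bar> ^ 4" for x
  proof (cases "\<bar>f x\<bar> \<le> 1")
    case True
    then have "\<bar>f x\<bar> ^ k \<le> 1" by (simp add: power_le_one)
    then show ?thesis by (simp add: add_increasing2)
  next
    case False
    then show ?thesis using assms(2) power_increasing[of k 4 "\<bar>f x\<bar>"] by simp
  qed
  then show "AE x in M. norm (f x ^ k) \<le> norm (1 + f x ^ 4)"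
    by (simp add: power_abs power_even_abs_numeral)
qed

lemma L4_integrable:
  assumes "L4 f"
  shows "integrable M f" "integrable M (\<lambda>x. f x ^ 2)" "integrable M (\<lambda>x. f x ^ 4)"
  using L4_integrable_power[OF assms, of 1] L4_integrable_power[OF assms, of 2] assms
  by (auto simp: L4_def)

lemma L4_measurable: "L4 f \<Longrightarrow> f \<in> borel_measurable M"
  by (simp add: L4_def)

lemma L4_const [simp, intro]: "L4 (\<lambda>_. c)"
  by (simp add: L4_def)

lemma L4_add [intro]:
  assumes "L4 f" "L4 g"
  shows "L4 (\<lambda>x. f x + g x)"
proof -
  have "integrable M (\<lambda>x. (f x + g x) ^ 4)"
  proof (rule Bochner_Integration.integrable_bound[of _ "\<lambda>x. 8 * (f x ^ 4 + g x ^ 4)"])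
    show "integrable M (\<lambda>x. 8 * (f x ^ 4 + g x ^ 4))" "(\<lambda>x. (f x + g x) ^ 4) \<in> borel_measurable M"
      using assms by (auto simp: L4_def)
    show "AE x in M. norm ((f x + g x) ^ 4) \<le> norm (8 * (f x ^ 4 + g x ^ 4))"
      using power4_add_le by simp
  qed
  then show ?thesis using assms by (auto simp: L4_def)
qed

lemma L4_cmult [intro]: "L4 f \<Longrightarrow> L4 (\<lambda>x. c * f x)"
  by (auto simp: L4_def power_mult_distrib)

lemma L4_mult_const [intro]: "L4 f \<Longrightarrow> L4 (\<lambda>x. f x * c)"
  using L4_cmult[of f c] by (simp add: mult.commute)

lemma L4_diff [intro]: "L4 f \<Longrightarrow> L4 g \<Longrightarrow> L4 (\<lambda>x. f x - g x)"
  using L4_add[of f "\<lambda>x. -1 * g x"] L4_cmult[of g "-1"] by simp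

lemma L4_sum [intro]: "(\<And>k. k \<in> S \<Longrightarrow> L4 (f k)) \<Longrightarrow> L4 (\<lambda>\<omega>. \<Sum>k\<in>S. f k \<omega>)"
  by (induction S rule: infinite_finite_induct) auto

lemma L4_dominated:
  assumes f: "L4 f" and g: "g \<in> borel_measurable M" and le: "\<And>x. \<bar>g x\<bar> \<le> \<bar>f x\<bar>"
  shows "L4 g"
proof -
  have "integrable M (\<lambda>x. g x ^ 4)"
  proof (rule Bochner_Integration.integrable_bound[OF L4_integrable(3)[OF f]])
    show "(\<lambda>x. g x ^ 4) \<in> borel_measurable M" using g by simp
    show "AE x in M. norm (g x ^ 4) \<le> norm (f x ^ 4)"
      using power_mono[OF le, of _ 4] by (simp add: power_abs)
  qed
  then show ?thesis using g by (simp add: L4_def)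
qed

lemma L4_integrable_mult4:
  assumes "L4 a" "L4 b" "L4 c" "L4 d"
  shows "integrable M (\<lambda>x. a x * b x * c x * d x)"
proof (rule Bochner_Integration.integrable_bound[of _ "\<lambda>x. a x ^ 4 + b x ^ 4 + c x ^ 4 + d x ^ 4"])
  show "integrable M (\<lambda>x. a x ^ 4 + b x ^ 4 + c x ^ 4 + d x ^ 4)"
    "(\<lambda>x. a x * b x * c x * d x) \<in> borel_measurable M"
    using assms by (auto simp: L4_def)
  show "AE x in M. norm (a x * b x * c x * d x) \<le> norm (a x ^ 4 + b x ^ 4 + c x ^ 4 + d x ^ 4)"
    using abs_mult4_le_sum_power4 by (simp add: add_nonneg_nonneg)
qed

lemma L4_integrable_mult: "L4 f \<Longrightarrow> L4 g \<Longrightarrow> integrable M (\<lambda>x. f x * g x)"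
  using L4_integrable_mult4[of f g "\<lambda>_. 1" "\<lambda>_. 1"] by simp

lemma indep_var_integral_split:
  fixes f :: "'p \<times> 'p \<Rightarrow> real"
  assumes ind: "indep_var S P T Q" and [measurable]: "f \<in> borel_measurable (S \<Otimes>\<^sub>M T)"
    and int: "integrable M (\<lambda>\<omega>. f (P \<omega>, Q \<omega>))"
  shows "(\<integral>\<omega>. f (P \<omega>, Q \<omega>) \<partial>M) = (\<integral>\<omega>. (\<integral>\<omega>'. f (P \<omega>, Q \<omega>') \<partial>M) \<partial>M)"
proof -
  have [measurable]: "P \<in> measurable M S" "Q \<in> measurable M T"
    using ind by (auto dest: indep_var_rv1 indep_var_rv2)
  have eq: "distr M S P \<Otimes>\<^sub>M distr M T Q = distr M (S \<Otimes>\<^sub>M T) (\<lambda>x. (P x, Q x))"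
    using ind indep_var_distribution_eq by blast
  interpret Q: prob_space "distr M T Q" by (rule prob_space_distr) simp
  interpret PQ: pair_prob_space "distr M S P" "distr M T Q"
    by (simp add: pair_prob_space.intro pair_sigma_finite_def prob_space_distr prob_space_imp_sigma_finite)
  have int2: "integrable (distr M S P \<Otimes>\<^sub>M distr M T Q) f"
    unfolding eq by (subst integrable_distr_eq) (use int in auto)
  have "(\<integral>\<omega>. f (P \<omega>, Q \<omega>) \<partial>M) = integral\<^sup>L (distr M S P \<Otimes>\<^sub>M distr M T Q) f"
    unfolding eq by (subst integral_distr) auto
  also have "\<dots> = (\<integral>p. (\<integral>q. f (p, q) \<partial>distr M T Q) \<partial>distr M S P)"
    using PQ.integral_fst'[OF int2] by simp
  also have "\<dots> = (\<integral>\<omega>. (\<integral>\<omega>'. f (P \<omega>, Q \<omega>') \<partial>M) \<partial>M)"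
    by (subst integral_distr) (auto intro!: Q.borel_measurable_lebesgue_integral
        Bochner_Integration.integral_cong simp: integral_distr measurable_space[of P M S])
  finally show ?thesis .
qed

lemma indep_var_nn_integral_split:
  fixes f :: "'p \<times> 'p \<Rightarrow> ennreal"
  assumes ind: "indep_var S P T Q" and [measurable]: "f \<in> borel_measurable (S \<Otimes>\<^sub>M T)"
  shows "(\<integral>\<^sup>+\<omega>. f (P \<omega>, Q \<omega>) \<partial>M) = (\<integral>\<^sup>+\<omega>. (\<integral>\<^sup>+\<omega>'. f (P \<omega>, Q \<omega>') \<partial>M) \<partial>M)"
proof -
  have [measurable]: "P \<in> measurable M S" "Q \<in> measurable M T"
    using ind by (auto dest: indep_var_rv1 indep_var_rv2)
  have eq: "distr M S P \<Otimes>\<^sub>M distr M T Q = distr M (S \<Otimes>\<^sub>M T) (\<lambda>x. (P x, Q x))"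
    using ind indep_var_distribution_eq by blast
  interpret Q: prob_space "distr M T Q" by (rule prob_space_distr) simp
  have "(\<integral>\<^sup>+\<omega>. f (P \<omega>, Q \<omega>) \<partial>M) = integral\<^sup>N (distr M S P \<Otimes>\<^sub>M distr M T Q) f"
    unfolding eq by (subst nn_integral_distr) auto
  also have "\<dots> = (\<integral>\<^sup>+p. (\<integral>\<^sup>+q. f (p, q) \<partial>distr M T Q) \<partial>distr M S P)"
    using Q.nn_integral_fst[of f "distr M S P"] by simp
  also have "\<dots> = (\<integral>\<^sup>+\<omega>. (\<integral>\<^sup>+\<omega>'. f (P \<omega>, Q \<omega>') \<partial>M) \<partial>M)"
    by (subst nn_integral_distr) (auto intro!: Q.borel_measurable_nn_integral nn_integral_cong
        simp: nn_integral_distr measurable_space[of P M S])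
  finally show ?thesis .
qed

lemma indep_var_moments_add:
  assumes ind: "indep_var borel S borel Z" and L4: "L4 S" "L4 Z"
    and centred: "(\<integral>x. S x \<partial>M) = 0" "(\<integral>x. Z x \<partial>M) = 0"
  shows "(\<integral>x. (S x + Z x)^2 \<partial>M) = (\<integral>x. S x ^ 2 \<partial>M) + (\<integral>x. Z x ^ 2 \<partial>M)"
    and "(\<integral>x. (S x + Z x)^4 \<partial>M) =
           (\<integral>x. S x ^ 4 \<partial>M) + 6 * ((\<integral>x. S x ^ 2 \<partial>M) * (\<integral>x. Z x ^ 2 \<partial>M)) + (\<integral>x. Z x ^ 4 \<partial>M)"
proof -
  have ind_pow: "indep_var borel (\<lambda>x. S x ^ k) borel (\<lambda>x. Z x ^ m)" for k m
    using indep_var_compose[OF ind, of "\<lambda>x. x ^ k" borel "\<lambda>x. x ^ m" borel] by (simp add: comp_def)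
  have int: "integrable M (\<lambda>x. S x ^ k)" "integrable M (\<lambda>x. Z x ^ k)" if "k \<le> 4" for k
    using L4_integrable_power[OF L4(1) that] L4_integrable_power[OF L4(2) that] .
  have prod: "integrable M (\<lambda>x. S x ^ k * Z x ^ m)"
    "(\<integral>x. S x ^ k * Z x ^ m \<partial>M) = (\<integral>x. S x ^ k \<partial>M) * (\<integral>x. Z x ^ m \<partial>M)"
    if "k \<le> 4" "m \<le> 4" for k m
    using indep_var_integrable[OF ind_pow] indep_var_lebesgue_integral[OF ind_pow] int that by auto
  have e2: "(S x + Z x)^2 = S x ^ 2 + 2 * (S x ^ 1 * Z x ^ 1) + Z x ^ 2" for x
    by (simp add: power2_eq_square algebra_simps)
  have e4: "(S x + Z x)^4 = S x ^ 4 + 4 * (S x ^ 3 * Z x ^ 1) + 6 * (S x ^ 2 * Z x ^ 2)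
      + 4 * (S x ^ 1 * Z x ^ 3) + Z x ^ 4" for x
    by (simp add: power2_eq_square power3_eq_cube power4_eq_xxxx algebra_simps)
  show "(\<integral>x. (S x + Z x)^2 \<partial>M) = (\<integral>x. S x ^ 2 \<partial>M) + (\<integral>x. Z x ^ 2 \<partial>M)"
    unfolding e2 using prod[of 1 1] int[of 2] centred by simp
  show "(\<integral>x. (S x + Z x)^4 \<partial>M) =
      (\<integral>x. S x ^ 4 \<partial>M) + 6 * ((\<integral>x. S x ^ 2 \<partial>M) * (\<integral>x. Z x ^ 2 \<partial>M)) + (\<integral>x. Z x ^ 4 \<partial>M)"
    unfolding e4 using prod[of 3 1] prod[of 1 3] prod[of 2 2] int[of 4] centred by simp
qed

lemma indep_vars_sum_moments:
  assumes "finite J" and ind: "indep_vars (\<lambda>_. borel) Y J"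
    and L4: "\<And>i. i \<in> J \<Longrightarrow> L4 (Y i)" and centred: "\<And>i. i \<in> J \<Longrightarrow> (\<integral>x. Y i x \<partial>M) = 0"
  shows "(\<integral>x. (\<Sum>i\<in>J. Y i x)^2 \<partial>M) = (\<Sum>i\<in>J. \<integral>x. Y i x ^ 2 \<partial>M)"
    and "(\<integral>x. (\<Sum>i\<in>J. Y i x)^4 \<partial>M) \<le> (\<Sum>i\<in>J. \<integral>x. Y i x ^ 4 \<partial>M) + 3 * (\<Sum>i\<in>J. \<integral>x. Y i x ^ 2 \<partial>M)^2"
proof -
  have "(\<integral>x. (\<Sum>i\<in>J. Y i x)^2 \<partial>M) = (\<Sum>i\<in>J. \<integral>x. Y i x ^ 2 \<partial>M) \<and>
    (\<integral>x. (\<Sum>i\<in>J. Y i x)^4 \<partial>M) \<le> (\<Sum>i\<in>J. \<integral>x. Y i x ^ 4 \<partial>M) + 3 * (\<Sum>i\<in>J. \<integral>x. Y i x ^ 2 \<partial>M)^2"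
    using assms
  proof (induction J rule: finite_induct)
    case (insert a J)
    define S where "S x = (\<Sum>i\<in>J. Y i x)" for x
    have IH: "(\<integral>x. S x ^ 2 \<partial>M) = (\<Sum>i\<in>J. \<integral>x. Y i x ^ 2 \<partial>M)"
      "(\<integral>x. S x ^ 4 \<partial>M) \<le> (\<Sum>i\<in>J. \<integral>x. Y i x ^ 4 \<partial>M) + 3 * (\<Sum>i\<in>J. \<integral>x. Y i x ^ 2 \<partial>M)^2"
      using insert.IH[OF indep_vars_subset[OF insert.prems(1)]] insert.prems by (auto simp: S_def)
    have "indep_var (PiM J (\<lambda>_. borel)) (\<lambda>x. restrict (\<lambda>i. Y i x) J)
        (PiM {a} (\<lambda>_. borel)) (\<lambda>x. restrict (\<lambda>i. Y i x) {a})"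
      by (rule indep_var_restrict[OF insert.prems(1)]) (use insert.hyps in auto)
    from indep_var_compose[OF this, of "\<lambda>g. \<Sum>i\<in>J. g i" borel "\<lambda>g. g a" borel]
    have ind_SZ: "indep_var borel S borel (Y a)"
      by (simp add: comp_def S_def[abs_def])
    have L4_S: "L4 S" unfolding S_def using insert.prems(2) by auto
    have "(\<integral>x. S x \<partial>M) = 0"
      unfolding S_def using insert.prems(2,3) L4_integrable(1) by (simp add: Bochner_Integration.integral_sum)
    note moments = indep_var_moments_add[OF ind_SZ L4_S insert.prems(2)[of a] this insert.prems(3)[of a]]
    have sum_eq: "(\<Sum>i\<in>insert a J. Y i x) = S x + Y a x" for x
      using insert.hyps by (simp add: S_def add.commute)
    define Q where "Q = (\<Sum>i\<in>J. \<integral>x. Y i x ^ 2 \<partial>M)"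
    define q where "q = (\<integral>x. Y a x ^ 2 \<partial>M)"
    have "3 * Q^2 + 6 * (Q * q) \<le> 3 * (q + Q)^2"
      using zero_le_power2[of q] by (simp add: power2_eq_square algebra_simps)
    then have "(\<integral>x. S x ^ 4 \<partial>M) + 6 * ((\<integral>x. S x ^ 2 \<partial>M) * (\<integral>x. Y a x ^ 2 \<partial>M)) + (\<integral>x. Y a x ^ 4 \<partial>M)
        \<le> (\<Sum>i\<in>insert a J. \<integral>x. Y i x ^ 4 \<partial>M) + 3 * (\<Sum>i\<in>insert a J. \<integral>x. Y i x ^ 2 \<partial>M)^2"
      using IH insert.hyps unfolding Q_def q_def by simp
    then show ?case unfolding sum_eq using moments IH insert.hyps by (simp add: add.commute)
  qed simp
  then show "(\<integral>x. (\<Sum>i\<in>J. Y i x)^2 \<partial>M) = (\<Sum>i\<in>J. \<integral>x. Y i x ^ 2 \<partial>M)"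
    and "(\<integral>x. (\<Sum>i\<in>J. Y i x)^4 \<partial>M) \<le> (\<Sum>i\<in>J. \<integral>x. Y i x ^ 4 \<partial>M) + 3 * (\<Sum>i\<in>J. \<integral>x. Y i x ^ 2 \<partial>M)^2"
    by auto
qed

definition second_moment_bigO :: "(nat \<Rightarrow> 'a \<Rightarrow> real) \<Rightarrow> nat \<Rightarrow> bool" where
  "second_moment_bigO F p \<longleftrightarrow>
     (\<forall>n. F n \<in> borel_measurable M \<and> integrable M (\<lambda>\<omega>. F n \<omega> ^ 2)) \<and>
     (\<exists>C\<ge>0. \<forall>n\<ge>1. (\<integral>\<omega>. F n \<omega> ^ 2 \<partial>M) \<le> C * real n ^ p)"

lemma second_moment_bigOI:
  assumes "\<And>n. F n \<in> borel_measurable M" "\<And>n. integrable M (\<lambda>\<omega>. F n \<omega> ^ 2)"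
    and "0 \<le> C" "\<And>n. 1 \<le> n \<Longrightarrow> (\<integral>\<omega>. F n \<omega> ^ 2 \<partial>M) \<le> C * real n ^ p"
  shows "second_moment_bigO F p"
  using assms unfolding second_moment_bigO_def by blast

lemma second_moment_bigOD:
  assumes "second_moment_bigO F p"
  shows "F n \<in> borel_measurable M" "integrable M (\<lambda>\<omega>. F n \<omega> ^ 2)"
    and "\<exists>C\<ge>0. \<forall>n\<ge>1. (\<integral>\<omega>. F n \<omega> ^ 2 \<partial>M) \<le> C * real n ^ p"
  using assms unfolding second_moment_bigO_def by blast+

lemma integral_add_square_le:
  fixes f g :: "'a \<Rightarrow> real"
  assumes [measurable]: "f \<in> borel_measurable M" "g \<in> borel_measurable M"
    and int: "integrable M (\<lambda>x. f x ^ 2)" "integrable M (\<lambda>x. g x ^ 2)"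
  shows "integrable M (\<lambda>x. (f x + g x) ^ 2)"
    and "(\<integral>x. (f x + g x) ^ 2 \<partial>M) \<le> 2 * (\<integral>x. f x ^ 2 \<partial>M) + 2 * (\<integral>x. g x ^ 2 \<partial>M)"
proof -
  have le: "(f x + g x) ^ 2 \<le> 2 * f x ^ 2 + 2 * g x ^ 2" for x
    using zero_le_power2[of "f x - g x"] by (simp add: power2_eq_square algebra_simps)
  show int_sum: "integrable M (\<lambda>x. (f x + g x) ^ 2)"
    by (rule Bochner_Integration.integrable_bound[of _ "\<lambda>x. 2 * f x ^ 2 + 2 * g x ^ 2"])
       (use int le in auto)
  show "(\<integral>x. (f x + g x) ^ 2 \<partial>M) \<le> 2 * (\<integral>x. f x ^ 2 \<partial>M) + 2 * (\<integral>x. g x ^ 2 \<partial>M)"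
    using integral_mono[OF int_sum _ le] int by simp
qed

lemma second_moment_bigO_add:
  assumes "second_moment_bigO F p" "second_moment_bigO G p"
  shows "second_moment_bigO (\<lambda>n \<omega>. F n \<omega> + G n \<omega>) p"
proof -
  note F = second_moment_bigOD(1,2)[OF assms(1)]
  obtain C where F_bound: "0 \<le> C" "\<And>n. 1 \<le> n \<Longrightarrow> (\<integral>\<omega>. F n \<omega> ^ 2 \<partial>M) \<le> C * real n ^ p"
    using second_moment_bigOD(3)[OF assms(1)] by blast
  note G = second_moment_bigOD(1,2)[OF assms(2)]
  obtain D where G_bound: "0 \<le> D" "\<And>n. 1 \<le> n \<Longrightarrow> (\<integral>\<omega>. G n \<omega> ^ 2 \<partial>M) \<le> D * real n ^ p"
    using second_moment_bigOD(3)[OF assms(2)] by blast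
  show ?thesis
  proof (rule second_moment_bigOI)
    fix n :: nat assume "1 \<le> n"
    with F_bound(2)[of n] G_bound(2)[of n] integral_add_square_le(2)[OF F(1) G(1) F(2) G(2), of n n]
    show "(\<integral>\<omega>. (F n \<omega> + G n \<omega>) ^ 2 \<partial>M) \<le> (2 * C + 2 * D) * real n ^ p"
      by (simp add: algebra_simps)
  qed (use F G F_bound G_bound integral_add_square_le(1)[OF F(1) G(1) F(2) G(2)] in auto)
qed

lemma second_moment_bigO_cmult:
  assumes "second_moment_bigO F p"
  shows "second_moment_bigO (\<lambda>n \<omega>. c * F n \<omega>) p"
proof -
  note F = second_moment_bigOD(1,2)[OF assms(1)]
  obtain C where F_bound: "0 \<le> C" "\<And>n. 1 \<le> n \<Longrightarrow> (\<integral>\<omega>. F n \<omega> ^ 2 \<partial>M) \<le> C * real n ^ p"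
    using second_moment_bigOD(3)[OF assms(1)] by blast
  show ?thesis
  proof (rule second_moment_bigOI)
    fix n :: nat assume "1 \<le> n"
    with F_bound(2)[of n] show "(\<integral>\<omega>. (c * F n \<omega>) ^ 2 \<partial>M) \<le> (c^2 * C) * real n ^ p"
      by (simp add: power_mult_distrib mult.assoc mult_left_mono)
  qed (use F F_bound in \<open>auto simp: power_mult_distrib\<close>)
qed

lemma second_moment_bigO_mono:
  assumes "second_moment_bigO F p" "p \<le> q"
  shows "second_moment_bigO F q"
proof -
  note F = second_moment_bigOD(1,2)[OF assms(1)]
  obtain C where F_bound: "0 \<le> C" "\<And>n. 1 \<le> n \<Longrightarrow> (\<integral>\<omega>. F n \<omega> ^ 2 \<partial>M) \<le> C * real n ^ p"
    using second_moment_bigOD(3)[OF assms(1)] by blast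
  show ?thesis
  proof (rule second_moment_bigOI[OF F(1,2) F_bound(1)])
    fix n :: nat assume "1 \<le> n"
    then have "C * real n ^ p \<le> C * real n ^ q"
      using assms(2) F_bound(1) by (intro mult_left_mono power_increasing) auto
    with F_bound(2)[OF \<open>1 \<le> n\<close>] show "(\<integral>\<omega>. F n \<omega> ^ 2 \<partial>M) \<le> C * real n ^ q" by linarith
  qed
qed

lemma second_moment_bigO_orthogonal_sum:
  fixes f :: "nat \<Rightarrow> 'a \<Rightarrow> real"
  assumes meas: "\<And>k. f k \<in> borel_measurable M"
    and int: "\<And>k l. integrable M (\<lambda>\<omega>. f k \<omega> * f l \<omega>)"
    and orth: "\<And>k l. 1 \<le> k \<Longrightarrow> k < l \<Longrightarrow> (\<integral>\<omega>. f k \<omega> * f l \<omega> \<partial>M) = 0"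
    and bound: "\<And>k. 1 \<le> k \<Longrightarrow> (\<integral>\<omega>. f k \<omega> ^ 2 \<partial>M) \<le> C * real k ^ p" and "0 \<le> C"
  shows "second_moment_bigO (\<lambda>n \<omega>. \<Sum>k=1..n. f k \<omega>) (Suc p)"
proof -
  have orth': "(\<integral>\<omega>. f k \<omega> * f l \<omega> \<partial>M) = 0" if "1 \<le> k" "1 \<le> l" "k \<noteq> l" for k l
    using orth[of k l] orth[of l k] that by (cases "k < l") (auto simp: mult.commute)
  have square: "(\<lambda>\<omega>. (\<Sum>k=1..n. f k \<omega>)^2) = (\<lambda>\<omega>. \<Sum>k=1..n. \<Sum>l=1..n. f k \<omega> * f l \<omega>)" for n
    by (simp add: power2_eq_square sum_product)
  have int_square: "integrable M (\<lambda>\<omega>. (\<Sum>k=1..n. f k \<omega>)^2)" for n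
    unfolding square using int by auto
  show ?thesis
  proof (rule second_moment_bigOI)
    fix n :: nat assume "1 \<le> n"
    have "(\<integral>\<omega>. (\<Sum>k=1..n. f k \<omega>)^2 \<partial>M) = (\<Sum>k=1..n. \<Sum>l=1..n. \<integral>\<omega>. f k \<omega> * f l \<omega> \<partial>M)"
      unfolding square using int by (simp add: Bochner_Integration.integral_sum)
    also have "\<dots> = (\<Sum>k=1..n. \<integral>\<omega>. f k \<omega> ^ 2 \<partial>M)"
    proof (intro sum.cong refl)
      fix k assume "k \<in> {1..n}"
      then show "(\<Sum>l=1..n. \<integral>\<omega>. f k \<omega> * f l \<omega> \<partial>M) = (\<integral>\<omega>. f k \<omega> ^ 2 \<partial>M)"
        by (subst sum.remove[of _ k]) (auto simp: orth' power2_eq_square intro!: sum.neutral)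
    qed
    also have "\<dots> \<le> (\<Sum>k=1..n. C * real n ^ p)"
      using bound \<open>0 \<le> C\<close> by (intro sum_mono order.trans[OF bound mult_left_mono] power_mono) auto
    finally show "(\<integral>\<omega>. (\<Sum>k=1..n. f k \<omega>)^2 \<partial>M) \<le> C * real n ^ Suc p"
      by (simp add: algebra_simps)
  qed (use \<open>0 \<le> C\<close> meas int_square in auto)
qed

lemma second_moment_bigO_sum:
  fixes f :: "nat \<Rightarrow> 'a \<Rightarrow> real"
  assumes meas: "\<And>k. f k \<in> borel_measurable M" and int: "\<And>k. integrable M (\<lambda>\<omega>. f k \<omega> ^ 2)"
    and bound: "\<And>k. (\<integral>\<omega>. f k \<omega> ^ 2 \<partial>M) \<le> C * real k ^ p" and "0 \<le> C"
  shows "second_moment_bigO (\<lambda>n \<omega>. \<Sum>k<n. f k \<omega>) (p + 2)"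
proof -
  have cs: "(\<Sum>k<n. f k \<omega>)^2 \<le> real n * (\<Sum>k<n. f k \<omega> ^ 2)" for n \<omega>
    using sum_squared_le_sum_of_squares[of "\<lambda>k. f k \<omega>" "{..<n}"] by (simp add: mult.commute)
  have int_sum: "integrable M (\<lambda>\<omega>. (\<Sum>k<n. f k \<omega>)^2)" for n
    by (rule Bochner_Integration.integrable_bound[of _ "\<lambda>\<omega>. real n * (\<Sum>k<n. f k \<omega> ^ 2)"])
       (use int meas order.trans[OF cs abs_ge_self] in auto)
  show ?thesis
  proof (rule second_moment_bigOI)
    fix n :: nat
    have "(\<integral>\<omega>. (\<Sum>k<n. f k \<omega>)^2 \<partial>M) \<le> (\<integral>\<omega>. real n * (\<Sum>k<n. f k \<omega> ^ 2) \<partial>M)"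
      by (rule integral_mono[OF int_sum _ cs]) (use int in auto)
    also have "\<dots> = real n * (\<Sum>k<n. \<integral>\<omega>. f k \<omega> ^ 2 \<partial>M)"
      using int by (simp add: Bochner_Integration.integral_sum)
    also have "\<dots> \<le> real n * (\<Sum>k<n. C * real n ^ p)"
      using bound \<open>0 \<le> C\<close>
      by (intro mult_left_mono sum_mono order.trans[OF bound mult_left_mono] power_mono) auto
    finally show "(\<integral>\<omega>. (\<Sum>k<n. f k \<omega>)^2 \<partial>M) \<le> C * real n ^ (p + 2)"
      by (simp add: power2_eq_square power_add algebra_simps)
  qed (use \<open>0 \<le> C\<close> meas int_sum in auto)
qed

lemma measure_abs_gt_le_second_moment:
  fixes f :: "'a \<Rightarrow> real"
  assumes "f \<in> borel_measurable M" "integrable M (\<lambda>x. f x ^ 2)" "0 < e"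
  shows "measure M {x \<in> space M. e < \<bar>f x\<bar>} \<le> (\<integral>x. f x ^ 2 \<partial>M) / e ^ 2"
proof -
  have "e ^ 2 \<le> f x ^ 2" if "e < \<bar>f x\<bar>" for x
    using power_mono[of e "\<bar>f x\<bar>" 2] that assms(3) by simp
  then have "{x \<in> space M. e < \<bar>f x\<bar>} \<subseteq> {x \<in> space M. e ^ 2 \<le> f x ^ 2}"
    by auto
  then have "measure M {x \<in> space M. e < \<bar>f x\<bar>} \<le> measure M {x \<in> space M. e ^ 2 \<le> f x ^ 2}"
    by (intro finite_measure_mono) (use assms(1) in measurable)
  also have "\<dots> \<le> (\<integral>x. f x ^ 2 \<partial>M) / e ^ 2"
    using assms by (intro integral_Markov_inequality_measure[of _ _ "space M"]) auto
  finally show ?thesis .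
qed

lemma second_moment_bigO_conv_prob_zero:
  assumes "second_moment_bigO F p" "p < 4"
  shows "conv_prob_zero M (\<lambda>n \<omega>. 1 / real n ^ 2 * F n \<omega>)"
  unfolding conv_prob_zero_def
proof (intro allI impI)
  fix e :: real assume "0 < e"
  note F = second_moment_bigOD(1,2)[OF assms(1)]
  obtain C where C: "0 \<le> C" "\<And>n. 1 \<le> n \<Longrightarrow> (\<integral>\<omega>. F n \<omega> ^ 2 \<partial>M) \<le> C * real n ^ p"
    using second_moment_bigOD(3)[OF assms(1)] by blast
  let ?P = "\<lambda>n. measure M {\<omega> \<in> space M. e < \<bar>1 / real n ^ 2 * F n \<omega>\<bar>}"
  have "?P n \<le> C / e^2 / real n" if "1 \<le> n" for n
  proof -
    have "integrable M (\<lambda>\<omega>. (1 / real n ^ 2 * F n \<omega>) ^ 2)"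
      unfolding power_mult_distrib by (rule integrable_mult_right[OF F(2)])
    then have "?P n \<le> (\<integral>\<omega>. (1 / real n ^ 2 * F n \<omega>) ^ 2 \<partial>M) / e ^ 2"
      using F(1) \<open>0 < e\<close> by (intro measure_abs_gt_le_second_moment) auto
    also have "\<dots> = (1 / real n ^ 2) ^ 2 * (\<integral>\<omega>. F n \<omega> ^ 2 \<partial>M) / e ^ 2"
      by (simp only: power_mult_distrib integral_mult_right_zero)
    also have "\<dots> \<le> (1 / real n ^ 2) ^ 2 * (C * real n ^ 3) / e ^ 2"
    proof -
      have "C * real n ^ p \<le> C * real n ^ 3"
        using that assms(2) C(1) by (intro mult_left_mono power_increasing) auto
      then show ?thesis using C(2)[OF that] by (intro divide_right_mono mult_left_mono) auto
    qed
    also have "\<dots> = C / e^2 / real n"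
      using that by (simp add: power2_eq_square power3_eq_cube)
    finally show ?thesis .
  qed
  then have "\<forall>\<^sub>F n in sequentially. ?P n \<le> C / e^2 / real n"
    by (auto simp: eventually_sequentially intro!: exI[of _ 1])
  then show "?P \<longlonglongrightarrow> 0"
  proof (rule tendsto_sandwich[of "\<lambda>_. 0", rotated])
    show "(\<lambda>n. C / e^2 / real n) \<longlonglongrightarrow> 0" by (rule lim_const_over_n)
  qed simp_all
qed

end

section \<open>The process as a function of its noise\<close>

definition bpi_step :: "nat \<Rightarrow> nat^2 \<Rightarrow> (noise_idx \<Rightarrow> nat^2) \<Rightarrow> nat^2" where
  "bpi_step k x g = (\<Sum>j\<in>{1..x $ 1}. g (XiI k j 1)) + (\<Sum>j\<in>{1..x $ 2}. g (XiI k j 2)) + g (EpsI k)"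

primrec bpi_of :: "(noise_idx \<Rightarrow> nat^2) \<Rightarrow> nat \<Rightarrow> nat^2" where
  "bpi_of g 0 = 0"
| "bpi_of g (Suc k) = bpi_step (Suc k) (bpi_of g k) g"

lemma bpi_eq_bpi_of: "bpi xi1 xi2 eps k \<omega> = bpi_of (\<lambda>i. noise_family xi1 xi2 eps i \<omega>) k"
  by (induction k) (auto simp: noise_family_def bpi_step_def)

definition step_indices :: "nat \<Rightarrow> nat^2 \<Rightarrow> noise_idx set" where
  "step_indices k x = (\<lambda>j. XiI k j 1) ` {1..x$1} \<union> (\<lambda>j. XiI k j 2) ` {1..x$2} \<union> {EpsI k}"

text \<open>
  The process up to generation \<open>l - 1\<close> only reads the noise indexed by \<open>past_indices l\<close>
  (\<open>bpi_of_restrict_past\<close>), which is disjoint from that of generation \<open>l\<close>; this independence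
  drives every conditioning argument below.
\<close>

definition gen_indices :: "nat \<Rightarrow> noise_idx set" where
  "gen_indices k = {XiI k j i | j i. 1 \<le> j \<and> i \<in> {1,2}} \<union> {EpsI k}"

definition past_indices :: "nat \<Rightarrow> noise_idx set" where
  "past_indices l = (\<Union>k\<in>{1..<l}. gen_indices k)"

abbreviation noise_space :: "noise_idx set \<Rightarrow> (noise_idx \<Rightarrow> nat^2) measure" where
  "noise_space I \<equiv> PiM I (\<lambda>_. count_space UNIV)"

lemma finite_step_indices [simp]: "finite (step_indices k x)"
  by (simp add: step_indices_def)

lemma step_indices_subset_gen: "step_indices k x \<subseteq> gen_indices k"
  by (auto simp: step_indices_def gen_indices_def)

lemma sum_step_indices:
  "(\<Sum>i\<in>step_indices k x. f i) = (\<Sum>j\<in>{1..x$1}. f (XiI k j 1)) + (\<Sum>j\<in>{1..x$2}. f (XiI k j 2)) + f (EpsI k)"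
proof -
  have inj: "inj_on (\<lambda>j. XiI k j t) A" for t A by (auto intro: inj_onI)
  show ?thesis
    unfolding step_indices_def
    by (subst sum.union_disjoint, force, force, force)+
       (simp add: sum.reindex[OF inj] del: One_nat_def)
qed

lemma bpi_step_eq_sum: "bpi_step k x g = (\<Sum>i\<in>step_indices k x. g i)"
  by (simp add: sum_step_indices bpi_step_def)

lemma bpi_step_cong: "(\<And>i. i \<in> gen_indices k \<Longrightarrow> g i = g' i) \<Longrightarrow> bpi_step k x g = bpi_step k x g'"
  unfolding bpi_step_eq_sum using step_indices_subset_gen by (auto intro!: sum.cong)

lemma past_gen_indices_disjoint: "past_indices l \<inter> gen_indices l = {}"
  by (auto simp: past_indices_def gen_indices_def)

lemma gen_indices_subset_past: "1 \<le> k \<Longrightarrow> k < l \<Longrightarrow> gen_indices k \<subseteq> past_indices l"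
  by (auto simp: past_indices_def)

lemma gen_indices_subset_noise: "1 \<le> k \<Longrightarrow> gen_indices k \<subseteq> noise_indices"
  by (auto simp: gen_indices_def noise_indices_def)

lemma past_indices_subset_noise: "past_indices l \<subseteq> noise_indices"
  using gen_indices_subset_noise by (fastforce simp: past_indices_def)

lemma bpi_of_restrict_past: "k < l \<Longrightarrow> bpi_of (restrict g (past_indices l)) k = bpi_of g k"
proof (induction k)
  case (Suc k)
  then show ?case
    using gen_indices_subset_past[of "Suc k" l] by (auto intro!: bpi_step_cong)
qed simp

lemma bpi_step_restrict_gen: "bpi_step k x (restrict g (gen_indices k)) = bpi_step k x g"
  by (rule bpi_step_cong) simp

definition by_type :: "'b \<Rightarrow> 'b \<Rightarrow> 'b \<Rightarrow> noise_idx \<Rightarrow> 'b" where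
  "by_type x1 x2 xe i = (case i of XiI _ _ t \<Rightarrow> if t = 1 then x1 else x2 | EpsI _ \<Rightarrow> xe)"

lemma by_type_simps [simp]:
  "by_type x1 x2 xe (XiI k j t) = (if t = 1 then x1 else x2)" "by_type x1 x2 xe (EpsI k) = xe"
  by (simp_all add: by_type_def)

lemma sum_by_type_step_indices:
  "(\<Sum>i\<in>step_indices k x. by_type c1 c2 ce i) = of_nat (x$1) * c1 + of_nat (x$2) * c2 + (ce :: 'b :: comm_semiring_1)"
  by (simp add: sum_step_indices del: One_nat_def)

lemma measurable_add_countable:
  fixes f g :: "'a \<Rightarrow> 'b::{countable, plus}"
  assumes "f \<in> measurable M (count_space UNIV)" "g \<in> measurable M (count_space UNIV)"
  shows "(\<lambda>x. f x + g x) \<in> measurable M (count_space UNIV)"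
proof -
  have "(\<lambda>x. (\<lambda>a x. a + g x) (f x) x) \<in> measurable M (count_space UNIV)"
  proof (rule measurable_compose_countable[OF _ assms(1)])
    fix a :: 'b
    show "(\<lambda>x. a + g x) \<in> measurable M (count_space UNIV)"
      using measurable_compose[OF assms(2) measurable_count_space[of "\<lambda>b. a + b" UNIV]] by simp
  qed
  then show ?thesis by simp
qed

lemma measurable_sum_countable:
  fixes F :: "'i \<Rightarrow> 'a \<Rightarrow> 'b::{countable, comm_monoid_add}"
  assumes "\<And>j. j \<in> S \<Longrightarrow> F j \<in> measurable M (count_space UNIV)"
  shows "(\<lambda>x. \<Sum>j\<in>S. F j x) \<in> measurable M (count_space UNIV)"
proof (cases "finite S")
  case True then show ?thesis using assms
    by (induction S rule: finite_induct) (auto intro!: measurable_add_countable)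
qed simp

lemma measurable_bpi_step:
  assumes "gen_indices k \<subseteq> I"
  shows "(\<lambda>g. bpi_step k x g) \<in> measurable (noise_space I) (count_space UNIV)"
  unfolding bpi_step_eq_sum using assms step_indices_subset_gen
  by (intro measurable_sum_countable measurable_component_singleton) auto

lemma measurable_bpi_of:
  assumes "k < l"
  shows "(\<lambda>g. bpi_of g k) \<in> measurable (noise_space (past_indices l)) (count_space UNIV)"
  using assms
proof (induction k)
  case (Suc k)
  have "(\<lambda>g. (\<lambda>x g. bpi_step (Suc k) x g) (bpi_of g k) g)
      \<in> measurable (noise_space (past_indices l)) (count_space UNIV)"
    using Suc by (intro measurable_compose_countable[OF measurable_bpi_step] gen_indices_subset_past) auto
  then show ?case by simp
qed simp

section \<open>Total size and imbalance of a population vector\<close>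

definition tot :: "nat^2 \<Rightarrow> real" where
  "tot v = real (v$1) + real (v$2)"

definition dif :: "nat^2 \<Rightarrow> real" where
  "dif v = real (v$1) - real (v$2)"

lemma tot_add [simp]: "tot (x + y) = tot x + tot y"
  and dif_add [simp]: "dif (x + y) = dif x + dif y"
  and tot_zero [simp]: "tot 0 = 0"
  and dif_zero [simp]: "dif 0 = 0"
  by (simp_all add: tot_def dif_def)

lemma tot_nonneg: "0 \<le> tot v"
  by (simp add: tot_def)

lemma abs_dif_le_tot: "\<bar>dif v\<bar> \<le> tot v"
  by (simp add: tot_def dif_def)

lemma abs_component_le_norm_vreal: "\<bar>real (v$i)\<bar> \<le> norm (vreal v)"
  using component_le_norm_cart[of "vreal v" i] by (simp add: vreal_def)

lemma abs_tot_le_norm_vreal: "\<bar>tot v\<bar> \<le> 2 * norm (vreal v)"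
  and abs_dif_le_norm_vreal: "\<bar>dif v\<bar> \<le> 2 * norm (vreal v)"
  using abs_component_le_norm_vreal[of v 1] abs_component_le_norm_vreal[of v 2]
  by (simp_all add: tot_def dif_def)

lemma additive_step_centred:
  fixes L :: "nat^2 \<Rightarrow> 'b :: comm_ring_1"
  assumes "\<And>x y. L (x + y) = L x + L y" "L 0 = 0"
  shows "L (bpi_step l a g) - (of_nat (a$1) * m1 + of_nat (a$2) * m2 + me) =
    (\<Sum>i\<in>step_indices l a. by_type (\<lambda>v. L v - m1) (\<lambda>v. L v - m2) (\<lambda>v. L v - me) i (g i))"
proof -
  have L_sum: "L (\<Sum>i\<in>I. f i) = (\<Sum>i\<in>I. L (f i))" for I and f :: "noise_idx \<Rightarrow> nat^2"
    by (induction I rule: infinite_finite_induct) (simp_all add: assms)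
  have "by_type (\<lambda>v. L v - m1) (\<lambda>v. L v - m2) (\<lambda>v. L v - me) i (g i) = L (g i) - by_type m1 m2 me i" for i
    by (simp add: by_type_def split: noise_idx.split)
  then show ?thesis
    by (simp only: bpi_step_eq_sum L_sum sum_subtractf sum_by_type_step_indices)
qed

context prob_space
begin

lemma distr_eq_integral_cong:
  fixes g :: "'b \<Rightarrow> real"
  assumes X: "X \<in> measurable M (count_space UNIV)" and X': "X' \<in> measurable M (count_space UNIV)"
    and eq: "distr M (count_space UNIV) X = distr M (count_space UNIV) X'"
  shows "(\<integral>\<omega>. g (X \<omega>) \<partial>M) = (\<integral>\<omega>. g (X' \<omega>) \<partial>M)"
    and "integrable M (\<lambda>\<omega>. g (X \<omega>)) \<longleftrightarrow> integrable M (\<lambda>\<omega>. g (X' \<omega>))"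
proof -
  have "(\<integral>\<omega>. g (X \<omega>) \<partial>M) = integral\<^sup>L (distr M (count_space UNIV) X) g"
    using X by (rule integral_distr[symmetric]) simp
  also have "\<dots> = (\<integral>\<omega>. g (X' \<omega>) \<partial>M)"
    unfolding eq using X' by (rule integral_distr) simp
  finally show "(\<integral>\<omega>. g (X \<omega>) \<partial>M) = (\<integral>\<omega>. g (X' \<omega>) \<partial>M)" .
  have "integrable M (\<lambda>\<omega>. g (X \<omega>)) \<longleftrightarrow> integrable (distr M (count_space UNIV) X) g"
    using X by (rule integrable_distr_eq[symmetric]) simp
  also have "\<dots> \<longleftrightarrow> integrable M (\<lambda>\<omega>. g (X' \<omega>))"
    unfolding eq using X' by (rule integrable_distr_eq) simp
  finally show "integrable M (\<lambda>\<omega>. g (X \<omega>)) \<longleftrightarrow> integrable M (\<lambda>\<omega>. g (X' \<omega>))" .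
qed

lemma L4_of_moment8:
  fixes X :: "'a \<Rightarrow> nat^2" and L :: "nat^2 \<Rightarrow> real"
  assumes [measurable]: "X \<in> measurable M (count_space UNIV)"
    and mom: "integrable M (\<lambda>\<omega>. norm (vreal (X \<omega>)) ^ 8)"
    and bound: "\<And>v. \<bar>L v\<bar> \<le> 2 * norm (vreal v)"
  shows "L4 (\<lambda>\<omega>. L (X \<omega>))"
proof -
  have pow: "x ^ 8 = (x ^ 2) ^ 4" "x ^ 4 = (x ^ 2) ^ 2" for x :: real
    by (simp_all flip: power_mult)
  have "L4 (\<lambda>\<omega>. norm (vreal (X \<omega>)) ^ 2)"
    unfolding L4_def using mom by (simp add: pow(1)[symmetric])
  then have "L4 (\<lambda>\<omega>. norm (vreal (X \<omega>)))"
    using L4_integrable_power[of "\<lambda>\<omega>. norm (vreal (X \<omega>)) ^ 2" 2]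
    unfolding L4_def pow(2)[symmetric] by simp
  then show ?thesis
    by (rule L4_dominated[OF L4_cmult[of _ 2]]) (use bound in auto)
qed

lemma integral_component_vreal:
  fixes X :: "'a \<Rightarrow> nat^2"
  assumes X: "X \<in> measurable M (count_space UNIV)"
    and mom: "integrable M (\<lambda>\<omega>. norm (vreal (X \<omega>)) ^ 8)"
  shows "(\<integral>\<omega>. real (X \<omega> $ i) \<partial>M) = (\<integral>\<omega>. vreal (X \<omega>) \<partial>M) $ i"
proof -
  have "integrable M (\<lambda>\<omega>. norm (vreal (X \<omega>)))"
    by (rule L4_integrable(1)[OF L4_of_moment8[OF X mom]]) simp
  moreover have "(\<lambda>\<omega>. vreal (X \<omega>)) \<in> borel_measurable M"
    using measurable_compose[OF X, of vreal borel] by simp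
  ultimately have "integrable M (\<lambda>\<omega>. vreal (X \<omega>))"
    by (simp add: integrable_norm_iff)
  from integral_bounded_linear[OF bounded_linear_vec_nth this, of i]
  show ?thesis by (simp add: comp_def vreal_def)
qed

lemma integral_tot_dif_vreal:
  fixes X :: "'a \<Rightarrow> nat^2"
  assumes X: "X \<in> measurable M (count_space UNIV)"
    and mom: "integrable M (\<lambda>\<omega>. norm (vreal (X \<omega>)) ^ 8)"
  defines "m \<equiv> (\<integral>\<omega>. vreal (X \<omega>) \<partial>M)"
  shows "(\<integral>\<omega>. tot (X \<omega>) \<partial>M) = m$1 + m$2" and "(\<integral>\<omega>. dif (X \<omega>) \<partial>M) = m$1 - m$2"
proof -
  have "\<bar>real (v$i)\<bar> \<le> 2 * norm (vreal v)" for v i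
    using abs_component_le_norm_vreal[of v i] by simp
  then have "integrable M (\<lambda>\<omega>. real (X \<omega> $ i))" for i
    by (intro L4_integrable(1) L4_of_moment8[OF X mom])
  then show "(\<integral>\<omega>. tot (X \<omega>) \<partial>M) = m$1 + m$2" and "(\<integral>\<omega>. dif (X \<omega>) \<partial>M) = m$1 - m$2"
    using integral_component_vreal[OF X mom] by (simp_all add: tot_def dif_def m_def)
qed

lemma var_mat_quadratic_form:
  fixes X :: "'a \<Rightarrow> nat^2"
  assumes X: "X \<in> measurable M (count_space UNIV)"
    and mom: "integrable M (\<lambda>\<omega>. norm (vreal (X \<omega>)) ^ 8)"
  defines "m \<equiv> (\<integral>\<omega>. vreal (X \<omega>) \<partial>M)"
  shows "((var_mat M (\<lambda>\<omega>. vreal (X \<omega>))) *v vector [1, -1]) \<bullet> vector [1, -1]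
       = (\<integral>\<omega>. (dif (X \<omega>) - (m$1 - m$2))^2 \<partial>M)"
proof -
  define Y where "Y i \<omega> = real (X \<omega> $ i) - m$i" for i \<omega>
  have L4_Y: "L4 (Y i)" for i
  proof -
    have "\<bar>real (v$i)\<bar> \<le> 2 * norm (vreal v)" for v
      using abs_component_le_norm_vreal[of v i] by simp
    then show ?thesis
      unfolding Y_def by (intro L4_diff L4_of_moment8[OF X mom] L4_const)
  qed
  have int: "integrable M (\<lambda>\<omega>. Y a \<omega> * Y b \<omega>)" for a b
    by (rule L4_integrable_mult[OF L4_Y L4_Y])
  have var: "var_mat M (\<lambda>\<omega>. vreal (X \<omega>)) $ a $ b = (\<integral>\<omega>. Y a \<omega> * Y b \<omega> \<partial>M)" for a b
    unfolding var_mat_def Y_def m_def by (simp add: vreal_def)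
  have "(dif (X \<omega>) - (m$1 - m$2))^2 = Y 1 \<omega> * Y 1 \<omega> - Y 1 \<omega> * Y 2 \<omega> - Y 2 \<omega> * Y 1 \<omega> + Y 2 \<omega> * Y 2 \<omega>" for \<omega>
    unfolding Y_def dif_def by (simp add: power2_eq_square algebra_simps)
  then show ?thesis
    unfolding quadratic_form_diagonal_difference var using int by (simp add: mult.commute)
qed

end

section \<open>The two-type process\<close>

(* X (Suc k) is accessed through X_step instead of unfolding the random sums. *)
declare bpi.simps(2) [simp del]

locale two_type_bpi = prob_space M for M :: "'a measure" +
  fixes xi1 xi2 :: "nat \<Rightarrow> nat \<Rightarrow> 'a \<Rightarrow> nat^2" and eps :: "nat \<Rightarrow> 'a \<Rightarrow> nat^2" and \<alpha> \<beta> :: real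
  assumes indep: "indep_vars (\<lambda>_. count_space UNIV) (noise_family xi1 xi2 eps) noise_indices"
    and id1: "\<And>k j. k \<ge> 1 \<Longrightarrow> j \<ge> 1 \<Longrightarrow>
                distr M (count_space UNIV) (xi1 k j) = distr M (count_space UNIV) (xi1 1 1)"
    and id2: "\<And>k j. k \<ge> 1 \<Longrightarrow> j \<ge> 1 \<Longrightarrow>
                distr M (count_space UNIV) (xi2 k j) = distr M (count_space UNIV) (xi2 1 1)"
    and ideps: "\<And>k. k \<ge> 1 \<Longrightarrow>
                distr M (count_space UNIV) (eps k) = distr M (count_space UNIV) (eps 1)"
    and ab: "0 < \<alpha>" "\<alpha> < 1" "0 < \<beta>" "\<beta> < 1" "\<alpha> + \<beta> = 1"
    and mean1: "integral\<^sup>L M (\<lambda>\<omega>. vreal (xi1 1 1 \<omega>)) = vector [\<alpha>, \<beta>]"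
    and mean2: "integral\<^sup>L M (\<lambda>\<omega>. vreal (xi2 1 1 \<omega>)) = vector [\<beta>, \<alpha>]"
    and mom1: "integrable M (\<lambda>\<omega>. norm (vreal (xi1 1 1 \<omega>)) ^ 8)"
    and mom2: "integrable M (\<lambda>\<omega>. norm (vreal (xi2 1 1 \<omega>)) ^ 8)"
    and mom3: "integrable M (\<lambda>\<omega>. norm (vreal (eps 1 \<omega>)) ^ 8)"
begin

abbreviation X :: "nat \<Rightarrow> 'a \<Rightarrow> nat^2" where
  "X k \<equiv> bpi xi1 xi2 eps k"

definition noise :: "'a \<Rightarrow> noise_idx \<Rightarrow> nat^2" where
  "noise \<omega> i = noise_family xi1 xi2 eps i \<omega>"

definition past_noise :: "nat \<Rightarrow> 'a \<Rightarrow> noise_idx \<Rightarrow> nat^2" where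
  "past_noise l \<omega> = restrict (noise \<omega>) (past_indices l)"

definition gen_noise :: "nat \<Rightarrow> 'a \<Rightarrow> noise_idx \<Rightarrow> nat^2" where
  "gen_noise l \<omega> = restrict (noise \<omega>) (gen_indices l)"

lemma noise_simps [simp]:
  "noise \<omega> (XiI k j t) = (if t = 1 then xi1 k j \<omega> else xi2 k j \<omega>)" "noise \<omega> (EpsI k) = eps k \<omega>"
  by (simp_all add: noise_def noise_family_def)

lemma measurable_noise: "i \<in> noise_indices \<Longrightarrow> (\<lambda>\<omega>. noise \<omega> i) \<in> measurable M (count_space UNIV)"
  using indep by (auto simp: indep_vars_def noise_def[abs_def])

lemma measurable_xi1 [measurable]: "1 \<le> k \<Longrightarrow> 1 \<le> j \<Longrightarrow> xi1 k j \<in> measurable M (count_space UNIV)"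
  and measurable_xi2 [measurable]: "1 \<le> k \<Longrightarrow> 1 \<le> j \<Longrightarrow> xi2 k j \<in> measurable M (count_space UNIV)"
  and measurable_eps [measurable]: "1 \<le> k \<Longrightarrow> eps k \<in> measurable M (count_space UNIV)"
  using measurable_noise[of "XiI k j 1"] measurable_noise[of "XiI k j 2"] measurable_noise[of "EpsI k"]
  by (auto simp: noise_indices_def noise_def noise_family_def)

lemma distr_noise:
  assumes "i \<in> noise_indices"
  shows "distr M (count_space UNIV) (\<lambda>\<omega>. noise \<omega> i)
    = distr M (count_space UNIV) (\<lambda>\<omega>. noise \<omega> (by_type (XiI 1 1 1) (XiI 1 1 2) (EpsI 1) i))"
proof -
  from assms consider (type1) k j where "1 \<le> k" "1 \<le> j" "i = XiI k j 1"
    | (type2) k j where "1 \<le> k" "1 \<le> j" "i = XiI k j 2" | (immigrant) k where "1 \<le> k" "i = EpsI k"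
    by (auto simp: noise_indices_def)
  then show ?thesis
  proof cases
    case (type1 k j)
    then show ?thesis using id1[OF type1(1,2)] by (simp add: noise_def[abs_def] noise_family_def)
  next
    case (type2 k j)
    then show ?thesis using id2[OF type2(1,2)] by (simp add: noise_def[abs_def] noise_family_def)
  next
    case (immigrant k)
    then show ?thesis using ideps[OF immigrant(1)] by (simp add: noise_def[abs_def] noise_family_def)
  qed
qed

lemma integral_noise:
  fixes g :: "nat^2 \<Rightarrow> real"
  assumes "i \<in> noise_indices"
  shows "(\<integral>\<omega>. g (noise \<omega> i) \<partial>M) =
      by_type (\<integral>\<omega>. g (xi1 1 1 \<omega>) \<partial>M) (\<integral>\<omega>. g (xi2 1 1 \<omega>) \<partial>M) (\<integral>\<omega>. g (eps 1 \<omega>) \<partial>M) i"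
    and "integrable M (\<lambda>\<omega>. g (noise \<omega> i)) \<longleftrightarrow>
      by_type (integrable M (\<lambda>\<omega>. g (xi1 1 1 \<omega>))) (integrable M (\<lambda>\<omega>. g (xi2 1 1 \<omega>)))
        (integrable M (\<lambda>\<omega>. g (eps 1 \<omega>))) i"
proof -
  define rep where "rep = by_type (XiI 1 1 1) (XiI 1 1 2) (EpsI 1) i"
  have "(\<lambda>\<omega>. noise \<omega> i) \<in> measurable M (count_space UNIV)"
    and "(\<lambda>\<omega>. noise \<omega> rep) \<in> measurable M (count_space UNIV)"
    using measurable_noise assms by (auto simp: rep_def noise_indices_def by_type_def)
  note same = distr_eq_integral_cong[OF this distr_noise[OF assms, folded rep_def], of g]
  have "(\<lambda>\<omega>. g (noise \<omega> rep)) = by_type (\<lambda>\<omega>. g (xi1 1 1 \<omega>)) (\<lambda>\<omega>. g (xi2 1 1 \<omega>)) (\<lambda>\<omega>. g (eps 1 \<omega>)) i"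
    by (simp add: rep_def by_type_def split: noise_idx.split)
  then show "(\<integral>\<omega>. g (noise \<omega> i) \<partial>M) =
      by_type (\<integral>\<omega>. g (xi1 1 1 \<omega>) \<partial>M) (\<integral>\<omega>. g (xi2 1 1 \<omega>) \<partial>M) (\<integral>\<omega>. g (eps 1 \<omega>) \<partial>M) i"
    and "integrable M (\<lambda>\<omega>. g (noise \<omega> i)) \<longleftrightarrow>
      by_type (integrable M (\<lambda>\<omega>. g (xi1 1 1 \<omega>))) (integrable M (\<lambda>\<omega>. g (xi2 1 1 \<omega>)))
        (integrable M (\<lambda>\<omega>. g (eps 1 \<omega>))) i"
    unfolding same by (simp_all add: by_type_def split: noise_idx.split)
qed

lemma indep_past_gen_noise:
  "1 \<le> l \<Longrightarrow> indep_var (noise_space (past_indices l)) (past_noise l) (noise_space (gen_indices l)) (gen_noise l)"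
  unfolding past_noise_def gen_noise_def noise_def[abs_def]
  by (rule indep_var_restrict[OF indep past_gen_indices_disjoint past_indices_subset_noise
        gen_indices_subset_noise])

lemma measurable_past_noise [measurable]: "past_noise l \<in> measurable M (noise_space (past_indices l))"
  unfolding past_noise_def
  by (rule measurable_restrict) (use measurable_noise past_indices_subset_noise in blast)

lemma X_eq_bpi_of_past: "k < l \<Longrightarrow> X k \<omega> = bpi_of (past_noise l \<omega>) k"
  by (simp add: past_noise_def bpi_of_restrict_past bpi_eq_bpi_of noise_def[abs_def])

lemma X_step: "1 \<le> l \<Longrightarrow> X l \<omega> = bpi_step l (X (l - 1) \<omega>) (noise \<omega>)"
  by (cases l) (auto simp: bpi_eq_bpi_of noise_def[abs_def])

lemma measurable_X [measurable]: "X k \<in> measurable M (count_space UNIV)"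
proof -
  have "(\<lambda>\<omega>. bpi_of (past_noise (Suc k) \<omega>) k) \<in> measurable M (count_space UNIV)"
    using measurable_bpi_of[of k "Suc k"] by measurable
  moreover have "X k = (\<lambda>\<omega>. bpi_of (past_noise (Suc k) \<omega>) k)"
    using X_eq_bpi_of_past[of k "Suc k"] by auto
  ultimately show ?thesis by simp
qed

lemma moments_noise_by_type:
  fixes h1 h2 he :: "nat^2 \<Rightarrow> real"
  assumes i: "i \<in> noise_indices"
    and L4: "L4 (\<lambda>\<omega>. h1 (xi1 1 1 \<omega>))" "L4 (\<lambda>\<omega>. h2 (xi2 1 1 \<omega>))" "L4 (\<lambda>\<omega>. he (eps 1 \<omega>))"
  shows "L4 (\<lambda>\<omega>. by_type h1 h2 he i (noise \<omega> i))"
    and "(\<integral>\<omega>. by_type h1 h2 he i (noise \<omega> i) ^ p \<partial>M) =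
      by_type (\<integral>\<omega>. h1 (xi1 1 1 \<omega>) ^ p \<partial>M) (\<integral>\<omega>. h2 (xi2 1 1 \<omega>) ^ p \<partial>M) (\<integral>\<omega>. he (eps 1 \<omega>) ^ p \<partial>M) i"
proof -
  show "(\<integral>\<omega>. by_type h1 h2 he i (noise \<omega> i) ^ p \<partial>M) =
      by_type (\<integral>\<omega>. h1 (xi1 1 1 \<omega>) ^ p \<partial>M) (\<integral>\<omega>. h2 (xi2 1 1 \<omega>) ^ p \<partial>M) (\<integral>\<omega>. he (eps 1 \<omega>) ^ p \<partial>M) i"
    using integral_noise(1)[OF i, of "\<lambda>v. by_type h1 h2 he i v ^ p"]
    by (simp add: by_type_def split: noise_idx.split)
  have "integrable M (\<lambda>\<omega>. by_type h1 h2 he i (noise \<omega> i) ^ 4)"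
    using integral_noise(2)[OF i, of "\<lambda>v. by_type h1 h2 he i v ^ 4"] L4
    by (simp add: by_type_def L4_def split: noise_idx.split)
  moreover have "(\<lambda>\<omega>. by_type h1 h2 he i (noise \<omega> i)) \<in> borel_measurable M"
    using measurable_compose[OF measurable_noise[OF i], of "by_type h1 h2 he i" borel] by simp
  ultimately show "L4 (\<lambda>\<omega>. by_type h1 h2 he i (noise \<omega> i))"
    by (simp add: L4_def)
qed

lemma step_sum_moments:
  fixes h1 h2 he :: "nat^2 \<Rightarrow> real" and a :: "nat^2"
  assumes l: "1 \<le> l"
    and L4: "L4 (\<lambda>\<omega>. h1 (xi1 1 1 \<omega>))" "L4 (\<lambda>\<omega>. h2 (xi2 1 1 \<omega>))" "L4 (\<lambda>\<omega>. he (eps 1 \<omega>))"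
    and centred: "(\<integral>\<omega>. h1 (xi1 1 1 \<omega>) \<partial>M) = 0" "(\<integral>\<omega>. h2 (xi2 1 1 \<omega>) \<partial>M) = 0"
      "(\<integral>\<omega>. he (eps 1 \<omega>) \<partial>M) = 0"
  defines "T \<omega> \<equiv> \<Sum>i\<in>step_indices l a. by_type h1 h2 he i (noise \<omega> i)"
  shows "L4 T" and "(\<integral>\<omega>. T \<omega> \<partial>M) = 0"
    and "(\<integral>\<omega>. T \<omega> ^ 2 \<partial>M) = real (a$1) * (\<integral>\<omega>. h1 (xi1 1 1 \<omega>) ^ 2 \<partial>M)
      + real (a$2) * (\<integral>\<omega>. h2 (xi2 1 1 \<omega>) ^ 2 \<partial>M) + (\<integral>\<omega>. he (eps 1 \<omega>) ^ 2 \<partial>M)"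
    and "(\<integral>\<omega>. T \<omega> ^ 4 \<partial>M) \<le>
      ((\<integral>\<omega>. h1 (xi1 1 1 \<omega>) ^ 4 \<partial>M) + (\<integral>\<omega>. h2 (xi2 1 1 \<omega>) ^ 4 \<partial>M) + (\<integral>\<omega>. he (eps 1 \<omega>) ^ 4 \<partial>M)
       + 3 * ((\<integral>\<omega>. h1 (xi1 1 1 \<omega>) ^ 2 \<partial>M) + (\<integral>\<omega>. h2 (xi2 1 1 \<omega>) ^ 2 \<partial>M)
         + (\<integral>\<omega>. he (eps 1 \<omega>) ^ 2 \<partial>M))^2) * (tot a + 1)^2"
proof -
  define J where "J = step_indices l a"
  define Y where "Y i \<omega> = by_type h1 h2 he i (noise \<omega> i)" for i \<omega>
  have J: "J \<subseteq> noise_indices"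
    using step_indices_subset_gen gen_indices_subset_noise[OF l] by (auto simp: J_def)
  note moments = moments_noise_by_type[OF subsetD[OF J] L4]
  have ind: "indep_vars (\<lambda>_. borel) Y J"
    unfolding Y_def using indep_vars_compose2[OF indep_vars_subset[OF indep J], of "\<lambda>i. by_type h1 h2 he i" "\<lambda>_. borel"]
    by (simp add: noise_def)
  have L4_Y: "L4 (Y i)" and mean_Y: "(\<integral>\<omega>. Y i \<omega> \<partial>M) = 0" if "i \<in> J" for i
    using moments(1)[OF that] moments(2)[OF that, of 1] centred
    by (simp_all add: Y_def[abs_def] by_type_def split: noise_idx.split)
  have T: "T = (\<lambda>\<omega>. \<Sum>i\<in>J. Y i \<omega>)" by (rule ext) (simp add: T_def Y_def J_def)
  show "L4 T" unfolding T using L4_Y by auto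
  show "(\<integral>\<omega>. T \<omega> \<partial>M) = 0"
    unfolding T using L4_Y mean_Y L4_integrable(1) by (simp add: Bochner_Integration.integral_sum)
  have sums: "(\<Sum>i\<in>J. \<integral>\<omega>. Y i \<omega> ^ p \<partial>M) = real (a$1) * (\<integral>\<omega>. h1 (xi1 1 1 \<omega>) ^ p \<partial>M)
      + real (a$2) * (\<integral>\<omega>. h2 (xi2 1 1 \<omega>) ^ p \<partial>M) + (\<integral>\<omega>. he (eps 1 \<omega>) ^ p \<partial>M)" for p
  proof -
    have "(\<Sum>i\<in>J. \<integral>\<omega>. Y i \<omega> ^ p \<partial>M) = (\<Sum>i\<in>J. by_type (\<integral>\<omega>. h1 (xi1 1 1 \<omega>) ^ p \<partial>M)
        (\<integral>\<omega>. h2 (xi2 1 1 \<omega>) ^ p \<partial>M) (\<integral>\<omega>. he (eps 1 \<omega>) ^ p \<partial>M) i)"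
      unfolding Y_def by (intro sum.cong refl moments(2))
    then show ?thesis by (simp add: J_def sum_by_type_step_indices)
  qed
  show "(\<integral>\<omega>. T \<omega> ^ 2 \<partial>M) = real (a$1) * (\<integral>\<omega>. h1 (xi1 1 1 \<omega>) ^ 2 \<partial>M)
      + real (a$2) * (\<integral>\<omega>. h2 (xi2 1 1 \<omega>) ^ 2 \<partial>M) + (\<integral>\<omega>. he (eps 1 \<omega>) ^ 2 \<partial>M)"
    using indep_vars_sum_moments(1)[OF _ ind L4_Y mean_Y] sums[of 2] by (simp add: T J_def)
  have "(\<integral>\<omega>. T \<omega> ^ 4 \<partial>M) \<le> (\<Sum>i\<in>J. \<integral>\<omega>. Y i \<omega> ^ 4 \<partial>M) + 3 * (\<Sum>i\<in>J. \<integral>\<omega>. Y i \<omega> ^ 2 \<partial>M)^2"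
    using indep_vars_sum_moments(2)[OF _ ind L4_Y mean_Y] by (simp add: T J_def)
  also have "\<dots> \<le> ((\<integral>\<omega>. h1 (xi1 1 1 \<omega>) ^ 4 \<partial>M) + (\<integral>\<omega>. h2 (xi2 1 1 \<omega>) ^ 4 \<partial>M) + (\<integral>\<omega>. he (eps 1 \<omega>) ^ 4 \<partial>M)
       + 3 * ((\<integral>\<omega>. h1 (xi1 1 1 \<omega>) ^ 2 \<partial>M) + (\<integral>\<omega>. h2 (xi2 1 1 \<omega>) ^ 2 \<partial>M)
         + (\<integral>\<omega>. he (eps 1 \<omega>) ^ 2 \<partial>M))^2) * (tot a + 1)^2"
    unfolding sums tot_def by (rule affine_moments_le_square) auto
  finally show "(\<integral>\<omega>. T \<omega> ^ 4 \<partial>M) \<le>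
      ((\<integral>\<omega>. h1 (xi1 1 1 \<omega>) ^ 4 \<partial>M) + (\<integral>\<omega>. h2 (xi2 1 1 \<omega>) ^ 4 \<partial>M) + (\<integral>\<omega>. he (eps 1 \<omega>) ^ 4 \<partial>M)
       + 3 * ((\<integral>\<omega>. h1 (xi1 1 1 \<omega>) ^ 2 \<partial>M) + (\<integral>\<omega>. h2 (xi2 1 1 \<omega>) ^ 2 \<partial>M)
         + (\<integral>\<omega>. he (eps 1 \<omega>) ^ 2 \<partial>M))^2) * (tot a + 1)^2" .
qed

lemma additive_step_moments:
  fixes L :: "nat^2 \<Rightarrow> real" and a :: "nat^2"
  assumes add: "\<And>x y. L (x + y) = L x + L y" and bound: "\<And>v. \<bar>L v\<bar> \<le> 2 * norm (vreal v)"
    and l: "1 \<le> l"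
  defines "m1 \<equiv> \<integral>\<omega>. L (xi1 1 1 \<omega>) \<partial>M" and "m2 \<equiv> \<integral>\<omega>. L (xi2 1 1 \<omega>) \<partial>M"
    and "me \<equiv> \<integral>\<omega>. L (eps 1 \<omega>) \<partial>M"
  defines "G \<omega> \<equiv> L (bpi_step l a (noise \<omega>)) - (real (a$1) * m1 + real (a$2) * m2 + me)"
  shows "L4 G" and "(\<integral>\<omega>. G \<omega> \<partial>M) = 0"
    and "(\<integral>\<omega>. G \<omega> ^ 2 \<partial>M) = real (a$1) * (\<integral>\<omega>. (L (xi1 1 1 \<omega>) - m1) ^ 2 \<partial>M)
      + real (a$2) * (\<integral>\<omega>. (L (xi2 1 1 \<omega>) - m2) ^ 2 \<partial>M) + (\<integral>\<omega>. (L (eps 1 \<omega>) - me) ^ 2 \<partial>M)"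
    and "(\<integral>\<omega>. G \<omega> ^ 4 \<partial>M) \<le>
      ((\<integral>\<omega>. (L (xi1 1 1 \<omega>) - m1) ^ 4 \<partial>M) + (\<integral>\<omega>. (L (xi2 1 1 \<omega>) - m2) ^ 4 \<partial>M)
       + (\<integral>\<omega>. (L (eps 1 \<omega>) - me) ^ 4 \<partial>M) + 3 * ((\<integral>\<omega>. (L (xi1 1 1 \<omega>) - m1) ^ 2 \<partial>M)
       + (\<integral>\<omega>. (L (xi2 1 1 \<omega>) - m2) ^ 2 \<partial>M) + (\<integral>\<omega>. (L (eps 1 \<omega>) - me) ^ 2 \<partial>M))^2) * (tot a + 1)^2"
proof -
  have L0: "L 0 = 0" using add[of 0 0] by simp
  have L4_L: "L4 (\<lambda>\<omega>. L (xi1 1 1 \<omega>))" "L4 (\<lambda>\<omega>. L (xi2 1 1 \<omega>))" "L4 (\<lambda>\<omega>. L (eps 1 \<omega>))"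
    using L4_of_moment8[OF _ _ bound] mom1 mom2 mom3 by auto
  have L4_h: "L4 (\<lambda>\<omega>. L (xi1 1 1 \<omega>) - m1)" "L4 (\<lambda>\<omega>. L (xi2 1 1 \<omega>) - m2)" "L4 (\<lambda>\<omega>. L (eps 1 \<omega>) - me)"
    using L4_L by auto
  have centred: "(\<integral>\<omega>. L (xi1 1 1 \<omega>) - m1 \<partial>M) = 0" "(\<integral>\<omega>. L (xi2 1 1 \<omega>) - m2 \<partial>M) = 0"
    "(\<integral>\<omega>. L (eps 1 \<omega>) - me \<partial>M) = 0"
    using L4_integrable(1)[OF L4_L(1)] L4_integrable(1)[OF L4_L(2)] L4_integrable(1)[OF L4_L(3)]
    by (simp_all add: m1_def m2_def me_def prob_space)
  have G: "G = (\<lambda>\<omega>. \<Sum>i\<in>step_indices l a. by_type (\<lambda>v. L v - m1) (\<lambda>v. L v - m2) (\<lambda>v. L v - me) i (noise \<omega> i))"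
    using additive_step_centred[of L, OF add L0] by (simp add: G_def[abs_def])
  show "L4 G" "(\<integral>\<omega>. G \<omega> \<partial>M) = 0"
    and "(\<integral>\<omega>. G \<omega> ^ 2 \<partial>M) = real (a$1) * (\<integral>\<omega>. (L (xi1 1 1 \<omega>) - m1) ^ 2 \<partial>M)
      + real (a$2) * (\<integral>\<omega>. (L (xi2 1 1 \<omega>) - m2) ^ 2 \<partial>M) + (\<integral>\<omega>. (L (eps 1 \<omega>) - me) ^ 2 \<partial>M)"
    and "(\<integral>\<omega>. G \<omega> ^ 4 \<partial>M) \<le>
      ((\<integral>\<omega>. (L (xi1 1 1 \<omega>) - m1) ^ 4 \<partial>M) + (\<integral>\<omega>. (L (xi2 1 1 \<omega>) - m2) ^ 4 \<partial>M)
       + (\<integral>\<omega>. (L (eps 1 \<omega>) - me) ^ 4 \<partial>M) + 3 * ((\<integral>\<omega>. (L (xi1 1 1 \<omega>) - m1) ^ 2 \<partial>M)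
       + (\<integral>\<omega>. (L (xi2 1 1 \<omega>) - m2) ^ 2 \<partial>M) + (\<integral>\<omega>. (L (eps 1 \<omega>) - me) ^ 2 \<partial>M))^2) * (tot a + 1)^2"
    unfolding G by (rule step_sum_moments[OF l L4_h centred])+
qed

lemma additive_step_fourth_moment:
  fixes L :: "nat^2 \<Rightarrow> real"
  assumes "\<And>x y. L (x + y) = L x + L y" "\<And>v. \<bar>L v\<bar> \<le> 2 * norm (vreal v)"
  shows "\<exists>C\<ge>0. \<forall>l a. 1 \<le> l \<longrightarrow> (\<integral>\<omega>. (L (bpi_step l a (noise \<omega>)) - (real (a$1) * (\<integral>\<omega>. L (xi1 1 1 \<omega>) \<partial>M)
      + real (a$2) * (\<integral>\<omega>. L (xi2 1 1 \<omega>) \<partial>M) + (\<integral>\<omega>. L (eps 1 \<omega>) \<partial>M))) ^ 4 \<partial>M) \<le> C * (tot a + 1)^2"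
proof -
  obtain C where C: "\<forall>l a. 1 \<le> l \<longrightarrow> (\<integral>\<omega>. (L (bpi_step l a (noise \<omega>)) - (real (a$1) * (\<integral>\<omega>. L (xi1 1 1 \<omega>) \<partial>M)
      + real (a$2) * (\<integral>\<omega>. L (xi2 1 1 \<omega>) \<partial>M) + (\<integral>\<omega>. L (eps 1 \<omega>) \<partial>M))) ^ 4 \<partial>M) \<le> C * (tot a + 1)^2"
    using additive_step_moments(4)[OF assms] by blast
  have "C * (tot a + 1)^2 \<le> max C 0 * (tot a + 1)^2" for a
    by (intro mult_right_mono) auto
  then show ?thesis
    using C by (intro exI[of _ "max C 0"]) (auto intro: order.trans)
qed

definition lam :: real where
  "lam = \<alpha> - \<beta>"

definition dif_mean_eps :: real where
  "dif_mean_eps = (\<integral>\<omega>. dif (eps 1 \<omega>) \<partial>M)"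

definition tot_mean_eps :: real where
  "tot_mean_eps = (\<integral>\<omega>. tot (eps 1 \<omega>) \<partial>M)"

definition dif_var1 :: real where
  "dif_var1 = (\<integral>\<omega>. (dif (xi1 1 1 \<omega>) - lam)^2 \<partial>M)"

definition dif_var2 :: real where
  "dif_var2 = (\<integral>\<omega>. (dif (xi2 1 1 \<omega>) + lam)^2 \<partial>M)"

definition dif_var_eps :: real where
  "dif_var_eps = (\<integral>\<omega>. (dif (eps 1 \<omega>) - dif_mean_eps)^2 \<partial>M)"

text \<open>
  \<open>dif_cvar x\<close> is the conditional variance of V_k given X_(k-1) = x; the average
  \<open>(dif_var1 + dif_var2) / 2\<close> of its coefficients is the paper's \<langle>V_\<xi> (1,-1), (1,-1)\<rangle>.
\<close>

definition dif_cvar :: "nat^2 \<Rightarrow> real" where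
  "dif_cvar x = real (x$1) * dif_var1 + real (x$2) * dif_var2 + dif_var_eps"

definition tot_cvar :: "nat^2 \<Rightarrow> real" where
  "tot_cvar x = real (x$1) * (\<integral>\<omega>. (tot (xi1 1 1 \<omega>) - 1)^2 \<partial>M)
     + real (x$2) * (\<integral>\<omega>. (tot (xi2 1 1 \<omega>) - 1)^2 \<partial>M) + (\<integral>\<omega>. (tot (eps 1 \<omega>) - tot_mean_eps)^2 \<partial>M)"

lemma dif_vars_nonneg: "0 \<le> dif_var1" "0 \<le> dif_var2" "0 \<le> dif_var_eps"
  by (simp_all add: dif_var1_def dif_var2_def dif_var_eps_def)

lemma tot_mean_eps_nonneg: "0 \<le> tot_mean_eps"
  by (simp add: tot_mean_eps_def tot_nonneg)

lemma abs_lam_less_1: "\<bar>lam\<bar> < 1"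
  using ab by (auto simp: lam_def)

lemma one_minus_lam_sq: "1 - lam^2 = 4 * \<alpha> * \<beta>"
proof -
  have "4 * \<alpha> * \<beta> = (\<alpha> + \<beta>)^2 - (\<alpha> - \<beta>)^2" by (simp add: power2_eq_square algebra_simps)
  then show ?thesis using ab(5) by (simp add: lam_def)
qed

lemma offspring_means:
  "(\<integral>\<omega>. dif (xi1 1 1 \<omega>) \<partial>M) = lam" "(\<integral>\<omega>. dif (xi2 1 1 \<omega>) \<partial>M) = - lam"
  "(\<integral>\<omega>. tot (xi1 1 1 \<omega>) \<partial>M) = 1" "(\<integral>\<omega>. tot (xi2 1 1 \<omega>) \<partial>M) = 1"
  using integral_tot_dif_vreal[OF measurable_xi1[OF order_refl order_refl] mom1]
    integral_tot_dif_vreal[OF measurable_xi2[OF order_refl order_refl] mom2] ab(5)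
  by (simp_all add: mean1[simplified] mean2[simplified] lam_def)

lemma dif_step_moments:
  fixes a :: "nat^2"
  assumes l: "1 \<le> l"
  defines "G \<omega> \<equiv> dif (bpi_step l a (noise \<omega>)) - (lam * dif a + dif_mean_eps)"
  shows "L4 G" and "(\<integral>\<omega>. G \<omega> \<partial>M) = 0" and "(\<integral>\<omega>. G \<omega> ^ 2 \<partial>M) = dif_cvar a"
proof -
  note moments = additive_step_moments[OF dif_add abs_dif_le_norm_vreal l, of a,
      unfolded offspring_means dif_mean_eps_def[symmetric]]
  have G: "G = (\<lambda>\<omega>. dif (bpi_step l a (noise \<omega>)) - (real (a$1) * lam + real (a$2) * - lam + dif_mean_eps))"
    by (rule ext) (simp add: G_def dif_def algebra_simps)
  show "L4 G" "(\<integral>\<omega>. G \<omega> \<partial>M) = 0" "(\<integral>\<omega>. G \<omega> ^ 2 \<partial>M) = dif_cvar a"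
    unfolding G using moments(1-3)
    by (simp_all add: dif_cvar_def dif_var1_def dif_var2_def dif_var_eps_def)
qed

lemma tot_step_moments:
  fixes a :: "nat^2"
  assumes l: "1 \<le> l"
  defines "G \<omega> \<equiv> tot (bpi_step l a (noise \<omega>)) - (tot a + tot_mean_eps)"
  shows "L4 G" and "(\<integral>\<omega>. G \<omega> \<partial>M) = 0" and "(\<integral>\<omega>. G \<omega> ^ 2 \<partial>M) = tot_cvar a"
proof -
  note moments = additive_step_moments[OF tot_add abs_tot_le_norm_vreal l, of a,
      unfolded offspring_means tot_mean_eps_def[symmetric]]
  have G: "G = (\<lambda>\<omega>. tot (bpi_step l a (noise \<omega>)) - (real (a$1) * 1 + real (a$2) * 1 + tot_mean_eps))"
    by (rule ext) (simp add: G_def tot_def)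
  show "L4 G" "(\<integral>\<omega>. G \<omega> \<partial>M) = 0" "(\<integral>\<omega>. G \<omega> ^ 2 \<partial>M) = tot_cvar a"
    unfolding G using moments(1-3) by (simp_all add: tot_cvar_def)
qed

lemma dif_step_fourth_moment:
  "\<exists>C\<ge>0. \<forall>l a. 1 \<le> l \<longrightarrow>
     (\<integral>\<omega>. (dif (bpi_step l a (noise \<omega>)) - (lam * dif a + dif_mean_eps)) ^ 4 \<partial>M) \<le> C * (tot a + 1)^2"
proof -
  have "real (a$1) * lam + real (a$2) * - lam + dif_mean_eps = lam * dif a + dif_mean_eps" for a :: "nat^2"
    by (simp add: dif_def algebra_simps)
  then show ?thesis
    using additive_step_fourth_moment[OF dif_add abs_dif_le_norm_vreal,
        unfolded offspring_means dif_mean_eps_def[symmetric]] by (simp only:)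
qed

lemma tot_step_fourth_moment:
  "\<exists>C\<ge>0. \<forall>l a. 1 \<le> l \<longrightarrow>
     (\<integral>\<omega>. (tot (bpi_step l a (noise \<omega>)) - (tot a + tot_mean_eps)) ^ 4 \<partial>M) \<le> C * (tot a + 1)^2"
proof -
  have "real (a$1) * 1 + real (a$2) * 1 + tot_mean_eps = tot a + tot_mean_eps" for a :: "nat^2"
    by (simp add: tot_def)
  then show ?thesis
    using additive_step_fourth_moment[OF tot_add abs_tot_le_norm_vreal,
        unfolded offspring_means tot_mean_eps_def[symmetric]] by (simp only:)
qed

subsection \<open>Conditioning on the past\<close>

text \<open>\<open>step_mean l \<phi> x\<close> is the conditional expectation of \<open>\<phi> (X (l - 1)) (X l)\<close> given \<open>X (l - 1) = x\<close>.\<close>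

definition step_mean :: "nat \<Rightarrow> (nat^2 \<Rightarrow> nat^2 \<Rightarrow> real) \<Rightarrow> nat^2 \<Rightarrow> real" where
  "step_mean l \<phi> x = (\<integral>\<omega>. \<phi> x (bpi_step l x (noise \<omega>)) \<partial>M)"

lemma measurable_transition:
  assumes "1 \<le> l"
  shows "(\<lambda>z. (bpi_of (fst z) (l - 1), bpi_step l (bpi_of (fst z) (l - 1)) (snd z)))
    \<in> measurable (noise_space (past_indices l) \<Otimes>\<^sub>M noise_space (gen_indices l)) (count_space UNIV)"
proof -
  have past: "(\<lambda>z. bpi_of (fst z) (l - 1))
      \<in> measurable (noise_space (past_indices l) \<Otimes>\<^sub>M noise_space (gen_indices l)) (count_space UNIV)"
    using measurable_compose[OF measurable_fst measurable_bpi_of[of "l - 1" l]] assms by simp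
  have step: "(\<lambda>z. (x, bpi_step l x (snd z)))
      \<in> measurable (noise_space (past_indices l) \<Otimes>\<^sub>M noise_space (gen_indices l)) (count_space UNIV)" for x
    using measurable_compose[OF measurable_compose[OF measurable_snd measurable_bpi_step[of l "gen_indices l" x]]
        measurable_count_space[of "Pair x" UNIV]] by simp
  show ?thesis using measurable_compose_countable[OF step past] by simp
qed

lemma integral_past_mult_step:
  fixes w :: "(noise_idx \<Rightarrow> nat^2) \<Rightarrow> real" and \<phi> :: "nat^2 \<Rightarrow> nat^2 \<Rightarrow> real"
  assumes l: "1 \<le> l" and w: "w \<in> borel_measurable (noise_space (past_indices l))"
    and int: "integrable M (\<lambda>\<omega>. w (past_noise l \<omega>) * \<phi> (X (l - 1) \<omega>) (X l \<omega>))"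
  shows "(\<integral>\<omega>. w (past_noise l \<omega>) * \<phi> (X (l - 1) \<omega>) (X l \<omega>) \<partial>M) =
         (\<integral>\<omega>. w (past_noise l \<omega>) * step_mean l \<phi> (X (l - 1) \<omega>) \<partial>M)"
proof -
  define f where "f z = w (fst z) * case_prod \<phi> (bpi_of (fst z) (l - 1), bpi_step l (bpi_of (fst z) (l - 1)) (snd z))"
    for z
  have f: "f \<in> borel_measurable (noise_space (past_indices l) \<Otimes>\<^sub>M noise_space (gen_indices l))"
    unfolding f_def using measurable_compose[OF measurable_transition[OF l], of "case_prod \<phi>" borel]
      measurable_compose[OF measurable_fst w] by (intro borel_measurable_times) auto
  have "f (past_noise l \<omega>, gen_noise l \<omega>') = w (past_noise l \<omega>) * \<phi> (X (l - 1) \<omega>) (bpi_step l (X (l - 1) \<omega>) (noise \<omega>'))"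
    for \<omega> \<omega>'
    using X_eq_bpi_of_past[of "l - 1" l \<omega>] l by (simp add: f_def gen_noise_def bpi_step_restrict_gen)
  moreover have "X l \<omega> = bpi_step l (X (l - 1) \<omega>) (noise \<omega>)" for \<omega>
    by (rule X_step[OF l])
  ultimately show ?thesis
    using indep_var_integral_split[OF indep_past_gen_noise[OF l] f] int by (simp add: step_mean_def)
qed

lemma nn_integral_step:
  fixes \<phi> :: "nat^2 \<Rightarrow> nat^2 \<Rightarrow> ennreal"
  assumes l: "1 \<le> l"
  shows "(\<integral>\<^sup>+\<omega>. \<phi> (X (l - 1) \<omega>) (X l \<omega>) \<partial>M) =
         (\<integral>\<^sup>+\<omega>. (\<integral>\<^sup>+\<omega>'. \<phi> (X (l - 1) \<omega>) (bpi_step l (X (l - 1) \<omega>) (noise \<omega>')) \<partial>M) \<partial>M)"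
proof -
  define f where "f z = case_prod \<phi> (bpi_of (fst z) (l - 1), bpi_step l (bpi_of (fst z) (l - 1)) (snd z))" for z
  have f: "f \<in> borel_measurable (noise_space (past_indices l) \<Otimes>\<^sub>M noise_space (gen_indices l))"
    unfolding f_def using measurable_compose[OF measurable_transition[OF l], of "case_prod \<phi>" borel] by simp
  have "f (past_noise l \<omega>, gen_noise l \<omega>') = \<phi> (X (l - 1) \<omega>) (bpi_step l (X (l - 1) \<omega>) (noise \<omega>'))" for \<omega> \<omega>'
    using X_eq_bpi_of_past[of "l - 1" l \<omega>] l by (simp add: f_def gen_noise_def bpi_step_restrict_gen)
  moreover have "X l \<omega> = bpi_step l (X (l - 1) \<omega>) (noise \<omega>)" for \<omega>
    by (rule X_step[OF l])
  ultimately show ?thesis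
    using indep_var_nn_integral_split[OF indep_past_gen_noise[OF l] f] by simp
qed

lemma measurable_bpi_of_triple:
  fixes F :: "nat^2 \<Rightarrow> nat^2 \<Rightarrow> nat^2 \<Rightarrow> real"
  assumes "i < l" "j < l" "m < l"
  shows "(\<lambda>p. F (bpi_of p i) (bpi_of p j) (bpi_of p m)) \<in> borel_measurable (noise_space (past_indices l))"
proof -
  note bpi_of = measurable_bpi_of[OF assms(1)] measurable_bpi_of[OF assms(2)] measurable_bpi_of[OF assms(3)]
  have last: "(\<lambda>p. F x y (bpi_of p m)) \<in> borel_measurable (noise_space (past_indices l))" for x y
    using measurable_compose[OF bpi_of(3), of "F x y" borel] by simp
  have "(\<lambda>p. F x (bpi_of p j) (bpi_of p m)) \<in> borel_measurable (noise_space (past_indices l))" for x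
    using measurable_compose_countable[where f = "\<lambda>y p. F x y (bpi_of p m)", OF last bpi_of(2)] by simp
  then show ?thesis
    using measurable_compose_countable[where f = "\<lambda>x p. F x (bpi_of p j) (bpi_of p m)", OF _ bpi_of(1)]
    by simp
qed

lemma integral_history_mult_step:
  fixes F :: "nat^2 \<Rightarrow> nat^2 \<Rightarrow> nat^2 \<Rightarrow> real" and \<phi> :: "nat^2 \<Rightarrow> nat^2 \<Rightarrow> real"
  assumes l: "1 \<le> l" and ijm: "i < l" "j < l" "m < l"
    and int: "integrable M (\<lambda>\<omega>. F (X i \<omega>) (X j \<omega>) (X m \<omega>) * \<phi> (X (l - 1) \<omega>) (X l \<omega>))"
  shows "(\<integral>\<omega>. F (X i \<omega>) (X j \<omega>) (X m \<omega>) * \<phi> (X (l - 1) \<omega>) (X l \<omega>) \<partial>M) =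
         (\<integral>\<omega>. F (X i \<omega>) (X j \<omega>) (X m \<omega>) * step_mean l \<phi> (X (l - 1) \<omega>) \<partial>M)"
  using integral_past_mult_step[OF l measurable_bpi_of_triple[OF ijm, of F]] int X_eq_bpi_of_past ijm by simp

subsection \<open>Moment growth\<close>

text \<open>\<open>V k = A k + D k\<close> splits V_k into its conditional mean given X_(k-1) and a martingale difference.\<close>

definition U :: "nat \<Rightarrow> 'a \<Rightarrow> real" where
  "U k \<omega> = tot (X k \<omega>)"

definition V :: "nat \<Rightarrow> 'a \<Rightarrow> real" where
  "V k \<omega> = dif (X k \<omega>)"

definition A :: "nat \<Rightarrow> 'a \<Rightarrow> real" where
  "A k \<omega> = lam * V (k - 1) \<omega> + dif_mean_eps"

definition D :: "nat \<Rightarrow> 'a \<Rightarrow> real" where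
  "D k \<omega> = V k \<omega> - A k \<omega>"

definition DU :: "nat \<Rightarrow> 'a \<Rightarrow> real" where
  "DU k \<omega> = U k \<omega> - (U (k - 1) \<omega> + tot_mean_eps)"

lemma U_0 [simp]: "U 0 \<omega> = 0" and V_0 [simp]: "V 0 \<omega> = 0"
  by (simp_all add: U_def V_def)

lemma D_eq: "D k \<omega> = dif (X k \<omega>) - (lam * dif (X (k - 1) \<omega>) + dif_mean_eps)"
  by (simp add: D_def A_def V_def)

lemma DU_eq: "DU k \<omega> = tot (X k \<omega>) - (tot (X (k - 1) \<omega>) + tot_mean_eps)"
  by (simp add: DU_def U_def)

lemma dif_cvar_tot_dif:
  "dif_cvar x = (dif_var1 + dif_var2) / 2 * tot x + (dif_var1 - dif_var2) / 2 * dif x + dif_var_eps"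
  by (simp add: dif_cvar_def tot_def dif_def field_simps)

lemma borel_measurable_fun_X: "(\<lambda>\<omega>. f (X k \<omega>) :: real) \<in> borel_measurable M"
  using measurable_compose[OF measurable_X, of f borel k] by simp

lemma L4_U: "L4 (U k)"
proof (induction k)
  case (Suc k)
  obtain C where C: "\<And>l a. 1 \<le> l \<Longrightarrow>
      (\<integral>\<omega>. (tot (bpi_step l a (noise \<omega>)) - (tot a + tot_mean_eps)) ^ 4 \<partial>M) \<le> C * (tot a + 1)^2"
    using tot_step_fourth_moment by blast
  define h where "h u = 8 * C * (u + 1)^2 + 8 * (u + tot_mean_eps)^4" for u
  have step: "(\<integral>\<^sup>+\<omega>'. ennreal (tot (bpi_step (Suc k) a (noise \<omega>')) ^ 4) \<partial>M) \<le> ennreal (h (tot a))" for a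
  proof -
    define G where "G \<omega> = tot (bpi_step (Suc k) a (noise \<omega>)) - (tot a + tot_mean_eps)" for \<omega>
    have L4_G: "L4 G" unfolding G_def by (rule tot_step_moments(1)) simp
    have "(\<integral>\<^sup>+\<omega>'. ennreal (tot (bpi_step (Suc k) a (noise \<omega>')) ^ 4) \<partial>M)
        \<le> (\<integral>\<^sup>+\<omega>'. ennreal (8 * G \<omega>' ^ 4 + 8 * (tot a + tot_mean_eps) ^ 4) \<partial>M)"
      using power4_add_le[of "G _" "tot a + tot_mean_eps"]
      by (intro nn_integral_mono ennreal_leI) (simp add: G_def)
    also have "\<dots> = ennreal (8 * (\<integral>\<omega>'. G \<omega>' ^ 4 \<partial>M) + 8 * (tot a + tot_mean_eps) ^ 4)"
      using L4_integrable(3)[OF L4_G] by (subst nn_integral_eq_integral) (auto simp: prob_space)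
    also have "\<dots> \<le> ennreal (h (tot a))"
      using C[of "Suc k" a] by (intro ennreal_leI) (simp add: h_def G_def)
    finally show ?thesis .
  qed
  have int_h: "integrable M (\<lambda>\<omega>. h (U k \<omega>))"
    using Suc.IH unfolding h_def by (intro L4_integrable Bochner_Integration.integrable_add
        integrable_mult_right L4_add L4_const) auto
  \<comment> \<open>nonnegative integrals, since integrability of U (Suc k) ^ 4 is what is being proved\<close>
  have "(\<integral>\<^sup>+\<omega>. ennreal (U (Suc k) \<omega> ^ 4) \<partial>M)
      = (\<integral>\<^sup>+\<omega>. (\<integral>\<^sup>+\<omega>'. ennreal (tot (bpi_step (Suc k) (X k \<omega>) (noise \<omega>')) ^ 4) \<partial>M) \<partial>M)"
    using nn_integral_step[of "Suc k" "\<lambda>x y. ennreal (tot y ^ 4)"] by (simp add: U_def)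
  also have "\<dots> \<le> (\<integral>\<^sup>+\<omega>. ennreal (h (U k \<omega>)) \<partial>M)"
    by (intro nn_integral_mono) (simp add: step U_def)
  also have "\<dots> \<le> (\<integral>\<^sup>+\<omega>. ennreal (norm (h (U k \<omega>))) \<partial>M)"
    by (intro nn_integral_mono ennreal_leI) simp
  also have "\<dots> < \<infinity>"
    using int_h by (simp add: integrable_iff_bounded)
  finally have "integrable M (\<lambda>\<omega>. U (Suc k) \<omega> ^ 4)"
    by (intro integrableI_nonneg) (auto simp: U_def borel_measurable_fun_X)
  then show ?case by (simp add: L4_def U_def borel_measurable_fun_X)
qed (simp add: U_def)

lemma L4_component: "L4 (\<lambda>\<omega>. real (X k \<omega> $ i))"
  by (rule L4_dominated[OF L4_U[of k]]) (use exhaust_2[of i] in \<open>auto simp: U_def tot_def borel_measurable_fun_X\<close>)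

lemma L4_V: "L4 (V k)"
  unfolding V_def[abs_def]
  by (rule L4_dominated[OF L4_U[of k]]) (auto simp: U_def borel_measurable_fun_X abs_dif_le_tot tot_nonneg)

lemma L4_A: "L4 (A k)" and L4_D: "L4 (D k)" and L4_DU: "L4 (DU k)"
  and L4_dif_cvar: "L4 (\<lambda>\<omega>. dif_cvar (X k \<omega>))" and L4_tot_cvar: "L4 (\<lambda>\<omega>. tot_cvar (X k \<omega>))"
  unfolding A_def[abs_def] D_def[abs_def] DU_def[abs_def] dif_cvar_def tot_cvar_def
  by (intro L4_add L4_cmult L4_mult_const L4_diff L4_const L4_U L4_V L4_component)+

lemma step_mean_dif_increment:
  "1 \<le> l \<Longrightarrow> step_mean l (\<lambda>x y. dif y - (lam * dif x + dif_mean_eps)) a = 0"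
  using dif_step_moments(2) by (simp add: step_mean_def)

lemma step_mean_tot_increment:
  "1 \<le> l \<Longrightarrow> step_mean l (\<lambda>x y. tot y - (tot x + tot_mean_eps)) a = 0"
  using tot_step_moments(2) by (simp add: step_mean_def)

lemma step_mean_dif_increment_sq:
  "1 \<le> l \<Longrightarrow> step_mean l (\<lambda>x y. (dif y - (lam * dif x + dif_mean_eps))^2 - dif_cvar x) a = 0"
  using dif_step_moments(3) L4_integrable(2)[OF dif_step_moments(1)] by (simp add: step_mean_def prob_space)

lemma integral_history_mult_D:
  assumes "1 \<le> l" "i < l" "j < l" "m < l"
    and "integrable M (\<lambda>\<omega>. F (X i \<omega>) (X j \<omega>) (X m \<omega>) * D l \<omega>)"
  shows "(\<integral>\<omega>. F (X i \<omega>) (X j \<omega>) (X m \<omega>) * D l \<omega> \<partial>M) = 0"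
  using integral_history_mult_step[OF assms(1-4), of F "\<lambda>x y. dif y - (lam * dif x + dif_mean_eps)"]
    assms(5) step_mean_dif_increment[OF assms(1)] by (simp add: D_eq)

lemma integral_history_mult_D_sq:
  assumes "1 \<le> l" "i < l" "j < l" "m < l"
    and "integrable M (\<lambda>\<omega>. F (X i \<omega>) (X j \<omega>) (X m \<omega>) * (D l \<omega> ^ 2 - dif_cvar (X (l - 1) \<omega>)))"
  shows "(\<integral>\<omega>. F (X i \<omega>) (X j \<omega>) (X m \<omega>) * (D l \<omega> ^ 2 - dif_cvar (X (l - 1) \<omega>)) \<partial>M) = 0"
  using integral_history_mult_step[OF assms(1-4), of F "\<lambda>x y. (dif y - (lam * dif x + dif_mean_eps))^2 - dif_cvar x"]
    assms(5) step_mean_dif_increment_sq[OF assms(1)] by (simp add: D_eq)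

lemma integral_history_mult_DU:
  assumes "1 \<le> l" "i < l" "j < l" "m < l"
    and "integrable M (\<lambda>\<omega>. F (X i \<omega>) (X j \<omega>) (X m \<omega>) * DU l \<omega>)"
  shows "(\<integral>\<omega>. F (X i \<omega>) (X j \<omega>) (X m \<omega>) * DU l \<omega> \<partial>M) = 0"
  using integral_history_mult_step[OF assms(1-4), of F "\<lambda>x y. tot y - (tot x + tot_mean_eps)"]
    assms(5) step_mean_tot_increment[OF assms(1)] by (simp add: DU_eq)

lemma integral_step_sq:
  assumes "1 \<le> l"
  shows "(\<integral>\<omega>. D l \<omega> ^ 2 \<partial>M) = (\<integral>\<omega>. dif_cvar (X (l - 1) \<omega>) \<partial>M)"
    and "(\<integral>\<omega>. DU l \<omega> ^ 2 \<partial>M) = (\<integral>\<omega>. tot_cvar (X (l - 1) \<omega>) \<partial>M)"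
  using integral_history_mult_step[OF assms, of 0 0 0 "\<lambda>_ _ _. 1" "\<lambda>x y. (dif y - (lam * dif x + dif_mean_eps))^2"]
    integral_history_mult_step[OF assms, of 0 0 0 "\<lambda>_ _ _. 1" "\<lambda>x y. (tot y - (tot x + tot_mean_eps))^2"]
    L4_integrable(2)[OF L4_D] L4_integrable(2)[OF L4_DU] dif_step_moments(3)[OF assms] tot_step_moments(3)[OF assms]
    assms by (simp_all add: D_eq DU_eq step_mean_def)

lemma integral_U: "(\<integral>\<omega>. U k \<omega> \<partial>M) = real k * tot_mean_eps"
proof (induction k)
  case (Suc k)
  have "(\<integral>\<omega>. (\<lambda>_ _ _. 1) (X 0 \<omega>) (X 0 \<omega>) (X 0 \<omega>) * DU (Suc k) \<omega> \<partial>M) = 0"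
    using L4_integrable(1)[OF L4_DU] by (intro integral_history_mult_DU) auto
  moreover have "U (Suc k) \<omega> = U k \<omega> + tot_mean_eps + DU (Suc k) \<omega>" for \<omega>
    by (simp add: DU_def)
  ultimately show ?case
    using Suc L4_integrable(1)[OF L4_U] L4_integrable(1)[OF L4_DU] by (simp add: prob_space algebra_simps)
qed simp

lemma tot_cvar_le: "\<exists>Q\<ge>0. \<forall>x. tot_cvar x \<le> Q * (tot x + 1)"
proof (intro exI conjI allI)
  define q1 q2 qe where "q1 = (\<integral>\<omega>. (tot (xi1 1 1 \<omega>) - 1)^2 \<partial>M)" and "q2 = (\<integral>\<omega>. (tot (xi2 1 1 \<omega>) - 1)^2 \<partial>M)"
    and "qe = (\<integral>\<omega>. (tot (eps 1 \<omega>) - tot_mean_eps)^2 \<partial>M)"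
  have q: "0 \<le> q1" "0 \<le> q2" "0 \<le> qe" by (simp_all add: q1_def q2_def qe_def)
  show "0 \<le> q1 + q2 + qe" using q by simp
  fix x :: "nat^2"
  have "real (x$1) \<le> tot x + 1" "real (x$2) \<le> tot x + 1" "1 \<le> tot x + 1"
    by (auto simp: tot_def)
  then have "real (x$1) * q1 + real (x$2) * q2 + 1 * qe \<le> (tot x + 1) * q1 + (tot x + 1) * q2 + (tot x + 1) * qe"
    using q by (intro add_mono mult_right_mono) auto
  then show "tot_cvar x \<le> (q1 + q2 + qe) * (tot x + 1)"
    by (simp add: tot_cvar_def q1_def q2_def qe_def algebra_simps)
qed

lemma second_moment_DU: "\<exists>Q\<ge>0. \<forall>k. (\<integral>\<omega>. DU (Suc k) \<omega> ^ 2 \<partial>M) \<le> Q * (real k * tot_mean_eps + 1)"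
proof -
  obtain Q where Q: "0 \<le> Q" "\<And>x. tot_cvar x \<le> Q * (tot x + 1)" using tot_cvar_le by blast
  have "(\<integral>\<omega>. DU (Suc k) \<omega> ^ 2 \<partial>M) \<le> Q * (real k * tot_mean_eps + 1)" for k
  proof -
    note int = L4_integrable(1)[OF L4_U[of k]]
    have "integrable M (\<lambda>\<omega>. Q * (U k \<omega> + 1))" using int by simp
    then have "(\<integral>\<omega>. DU (Suc k) \<omega> ^ 2 \<partial>M) \<le> (\<integral>\<omega>. Q * (U k \<omega> + 1) \<partial>M)"
      unfolding integral_step_sq(2)[of "Suc k", simplified] using Q L4_integrable(1)[OF L4_tot_cvar]
      by (intro integral_mono) (auto simp: U_def)
    then show ?thesis using int integral_U[of k] by (simp add: prob_space)
  qed
  then show ?thesis using Q(1) by blast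
qed

lemma second_moment_U_Suc:
  "(\<integral>\<omega>. U (Suc k) \<omega> ^ 2 \<partial>M)
     = (\<integral>\<omega>. U k \<omega> ^ 2 \<partial>M) + 2 * tot_mean_eps * (real k * tot_mean_eps) + tot_mean_eps^2
       + (\<integral>\<omega>. DU (Suc k) \<omega> ^ 2 \<partial>M)"
proof -
  let ?ce = tot_mean_eps
  have cross: "(\<integral>\<omega>. (\<lambda>x _ _. tot x + ?ce) (X k \<omega>) (X k \<omega>) (X k \<omega>) * DU (Suc k) \<omega> \<partial>M) = 0"
    by (rule integral_history_mult_DU)
       (auto intro!: L4_integrable_mult L4_add L4_DU simp: U_def[symmetric] L4_U)
  have "U (Suc k) \<omega> ^ 2 = U k \<omega> ^ 2 + 2 * ?ce * U k \<omega> + ?ce^2 + 2 * ((U k \<omega> + ?ce) * DU (Suc k) \<omega>)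
      + DU (Suc k) \<omega> ^ 2" for \<omega>
    by (simp add: DU_def power2_eq_square algebra_simps)
  then show ?thesis
    using L4_integrable[OF L4_U[of k]] cross integral_U[of k] L4_integrable(2)[OF L4_DU]
      L4_integrable_mult[OF L4_add[OF L4_U L4_const] L4_DU, of k ?ce "Suc k"]
    by (simp add: prob_space U_def[symmetric])
qed

lemma second_moment_U: "\<exists>C\<ge>0. \<forall>k. (\<integral>\<omega>. U k \<omega> ^ 2 \<partial>M) \<le> C * real k ^ 2"
proof -
  obtain Q where Q: "0 \<le> Q" "\<And>k. (\<integral>\<omega>. DU (Suc k) \<omega> ^ 2 \<partial>M) \<le> Q * (real k * tot_mean_eps + 1)"
    using second_moment_DU by blast
  define C where "C = tot_mean_eps^2 + Q * tot_mean_eps + Q"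
  have ce: "0 \<le> tot_mean_eps" by (rule tot_mean_eps_nonneg)
  have "(\<integral>\<omega>. U k \<omega> ^ 2 \<partial>M) \<le> C * real k ^ 2" for k
  proof (induction k)
    case (Suc k)
    have "2 * tot_mean_eps * (real k * tot_mean_eps) + tot_mean_eps^2 + Q * (real k * tot_mean_eps + 1)
        \<le> C * (2 * real k + 1)"
      using ce Q(1) by (simp add: C_def power2_eq_square algebra_simps mult_left_mono)
    then have "(\<integral>\<omega>. U (Suc k) \<omega> ^ 2 \<partial>M) \<le> C * real k ^ 2 + C * (2 * real k + 1)"
      using second_moment_U_Suc[of k] Suc.IH Q(2)[of k] by linarith
    then show ?case by (simp add: power2_eq_square algebra_simps)
  qed simp
  moreover have "0 \<le> C" using ce Q(1) by (simp add: C_def)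
  ultimately show ?thesis by blast
qed

lemma second_moment_U_plus_1: "\<exists>C\<ge>0. \<forall>k. (\<integral>\<omega>. (U k \<omega> + 1) ^ 2 \<partial>M) \<le> C * (real k + 1) ^ 2"
proof -
  obtain C where C: "0 \<le> C" "\<And>k. (\<integral>\<omega>. U k \<omega> ^ 2 \<partial>M) \<le> C * real k ^ 2"
    using second_moment_U by blast
  have "(\<integral>\<omega>. (U k \<omega> + 1) ^ 2 \<partial>M) \<le> (2 * C + 2) * (real k + 1) ^ 2" for k
  proof -
    note int = L4_integrable[OF L4_U[of k]]
    have "(\<integral>\<omega>. (U k \<omega> + 1) ^ 2 \<partial>M) \<le> (\<integral>\<omega>. 2 * U k \<omega> ^ 2 + 2 \<partial>M)"
      using int zero_le_power2[of "U k _ - 1"]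
      by (intro integral_mono) (auto simp: power2_eq_square algebra_simps)
    also have "\<dots> \<le> 2 * (C * real k ^ 2) + 2"
      using int C(2)[of k] by (simp add: prob_space)
    also have "\<dots> \<le> (2 * C + 2) * (real k + 1) ^ 2"
      using C(1) by (simp add: power2_eq_square algebra_simps mult_left_mono)
    finally show ?thesis .
  qed
  then show ?thesis using C(1) by (intro exI[of _ "2 * C + 2"]) auto
qed

lemma integral_bounded_by_tot_sq:
  fixes H :: "nat \<Rightarrow> nat^2 \<Rightarrow> real"
  assumes "\<And>l x. 0 \<le> H l x" "\<And>l x. H l x \<le> K * (tot x + 1) ^ 2"
  shows "\<exists>C\<ge>0. \<forall>l k. (\<integral>\<omega>. H l (X k \<omega>) \<partial>M) \<le> C * (real k + 1) ^ 2"
proof -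
  obtain C where C: "0 \<le> C" "\<And>k. (\<integral>\<omega>. (U k \<omega> + 1) ^ 2 \<partial>M) \<le> C * (real k + 1) ^ 2"
    using second_moment_U_plus_1 by blast
  have K: "0 \<le> K" using assms[of 0 0] by (simp add: tot_def)
  have int: "integrable M (\<lambda>\<omega>. K * (U k \<omega> + 1) ^ 2)" for k
    using L4_integrable(2)[OF L4_add[OF L4_U L4_const]] by simp
  have "(\<integral>\<omega>. H l (X k \<omega>) \<partial>M) \<le> (K * C) * (real k + 1) ^ 2" for l k
  proof -
    have "(\<integral>\<omega>. H l (X k \<omega>) \<partial>M) \<le> (\<integral>\<omega>. K * (U k \<omega> + 1) ^ 2 \<partial>M)"
      using assms int[of k] K
      by (intro integral_mono Bochner_Integration.integrable_bound[OF int[of k]])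
         (auto simp: U_def borel_measurable_fun_X)
    also have "\<dots> \<le> K * (C * (real k + 1) ^ 2)" using C(2) K by (simp add: mult_left_mono)
    finally show ?thesis by simp
  qed
  then show ?thesis using C(1) K by (intro exI[of _ "K * C"]) auto
qed

lemma fourth_moment_D: "\<exists>C\<ge>0. \<forall>l\<ge>1. (\<integral>\<omega>. D l \<omega> ^ 4 \<partial>M) \<le> C * real l ^ 2"
proof -
  obtain K where K: "0 \<le> K" "\<And>l a. 1 \<le> l \<Longrightarrow>
      (\<integral>\<omega>. (dif (bpi_step l a (noise \<omega>)) - (lam * dif a + dif_mean_eps)) ^ 4 \<partial>M) \<le> K * (tot a + 1)^2"
    using dif_step_fourth_moment by blast
  define H where "H l = step_mean (Suc l) (\<lambda>x y. (dif y - (lam * dif x + dif_mean_eps)) ^ 4)" for l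
  have "\<exists>C\<ge>0. \<forall>l k. (\<integral>\<omega>. H l (X k \<omega>) \<partial>M) \<le> C * (real k + 1) ^ 2"
    using K by (intro integral_bounded_by_tot_sq) (auto simp: H_def step_mean_def)
  then obtain C where C: "0 \<le> C" "\<And>l k. (\<integral>\<omega>. H l (X k \<omega>) \<partial>M) \<le> C * (real k + 1) ^ 2"
    by blast
  have "(\<integral>\<omega>. D l \<omega> ^ 4 \<partial>M) \<le> C * real l ^ 2" if "1 \<le> l" for l
  proof -
    have "(\<integral>\<omega>. D l \<omega> ^ 4 \<partial>M) = (\<integral>\<omega>. H (l - 1) (X (l - 1) \<omega>) \<partial>M)"
      using integral_history_mult_step[OF that, of 0 0 0 "\<lambda>_ _ _. 1" "\<lambda>x y. (dif y - (lam * dif x + dif_mean_eps)) ^ 4"]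
        L4_integrable(3)[OF L4_D] that by (simp add: D_eq H_def)
    then show ?thesis using C(2)[of "l - 1" "l - 1"] that by (simp add: of_nat_diff)
  qed
  then show ?thesis using C(1) by blast
qed

lemma fourth_moment_A_contraction:
  "(\<integral>\<omega>. A (Suc k) \<omega> ^ 4 \<partial>M)
     \<le> ((1 + \<bar>lam\<bar>) / 2) ^ 4 * (\<integral>\<omega>. V k \<omega> ^ 4 \<partial>M) + (2 * \<bar>dif_mean_eps\<bar> / (1 - \<bar>lam\<bar>)) ^ 4"
proof -
  have "(\<integral>\<omega>. A (Suc k) \<omega> ^ 4 \<partial>M)
      \<le> (\<integral>\<omega>. ((1 + \<bar>lam\<bar>) / 2) ^ 4 * V k \<omega> ^ 4 + (2 * \<bar>dif_mean_eps\<bar> / (1 - \<bar>lam\<bar>)) ^ 4 \<partial>M)"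
    using power4_affine_le[OF abs_lam_less_1] L4_integrable(3)[OF L4_A[of "Suc k"]] L4_integrable(3)[OF L4_V]
    by (intro integral_mono) (auto simp: A_def)
  then show ?thesis
    using L4_integrable(3)[OF L4_V] by (simp add: prob_space)
qed

lemma fourth_moment_V_le:
  assumes "0 < \<eta>"
  shows "(\<integral>\<omega>. V (Suc k) \<omega> ^ 4 \<partial>M)
     \<le> (1 + \<eta>) * (\<integral>\<omega>. A (Suc k) \<omega> ^ 4 \<partial>M) + (3 + 16 / \<eta>) * (\<integral>\<omega>. D (Suc k) \<omega> ^ 4 \<partial>M)"
proof -
  let ?A = "A (Suc k)" and ?D = "D (Suc k)"
  have int: "integrable M (\<lambda>\<omega>. ?A \<omega> ^ 4)" "integrable M (\<lambda>\<omega>. ?D \<omega> ^ 4)"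
    "integrable M (\<lambda>\<omega>. ?A \<omega> ^ 3 * ?D \<omega>)"
    using L4_integrable(3)[OF L4_A] L4_integrable(3)[OF L4_D]
      L4_integrable_mult4[OF L4_A L4_A L4_A L4_D, of "Suc k" "Suc k" "Suc k" "Suc k"]
    by (simp_all add: power3_eq_cube)
  have "(\<integral>\<omega>. ?A \<omega> ^ 3 * ?D \<omega> \<partial>M) = 0"
    using integral_history_mult_D[of "Suc k" k k k "\<lambda>x _ _. (lam * dif x + dif_mean_eps) ^ 3"] int(3)
    by (simp add: A_def V_def)
  moreover have "(\<integral>\<omega>. V (Suc k) \<omega> ^ 4 \<partial>M)
      \<le> (\<integral>\<omega>. (1 + \<eta>) * ?A \<omega> ^ 4 + 4 * (?A \<omega> ^ 3 * ?D \<omega>) + (3 + 16 / \<eta>) * ?D \<omega> ^ 4 \<partial>M)"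
  proof (rule integral_mono)
    fix \<omega>
    show "V (Suc k) \<omega> ^ 4 \<le> (1 + \<eta>) * ?A \<omega> ^ 4 + 4 * (?A \<omega> ^ 3 * ?D \<omega>) + (3 + 16 / \<eta>) * ?D \<omega> ^ 4"
      using power4_add_le_weighted[OF assms, of "?A \<omega>" "?D \<omega>"] by (simp add: D_def)
  qed (use int L4_integrable(3)[OF L4_V] in auto)
  ultimately show ?thesis using int by simp
qed

lemma fourth_moment_V_step:
  "\<exists>K\<ge>0. \<forall>k. (\<integral>\<omega>. V (Suc k) \<omega> ^ 4 \<partial>M)
     \<le> ((1 + \<bar>lam\<bar>) / 2) ^ 2 * (\<integral>\<omega>. V k \<omega> ^ 4 \<partial>M) + K * real (Suc k) ^ 2"
proof -
  obtain CD where CD: "0 \<le> CD" "\<And>l. 1 \<le> l \<Longrightarrow> (\<integral>\<omega>. D l \<omega> ^ 4 \<partial>M) \<le> CD * real l ^ 2"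
    using fourth_moment_D by blast
  define \<theta> where "\<theta> = (1 + \<bar>lam\<bar>) / 2"
  define R where "R = 2 * \<bar>dif_mean_eps\<bar> / (1 - \<bar>lam\<bar>)"
  \<comment> \<open>chosen so that (1 + \<eta>) \<theta>^4 = \<theta>^2: the contraction of A survives the cross terms\<close>
  define \<eta> where "\<eta> = 1 / \<theta>^2 - 1"
  have \<theta>: "0 < \<theta>" "\<theta> < 1" using abs_lam_less_1 by (auto simp: \<theta>_def)
  then have "\<theta> * \<theta> < 1 * 1" by (intro mult_strict_mono) auto
  with \<theta> have \<eta>: "0 < \<eta>" "(1 + \<eta>) * \<theta> ^ 4 = \<theta> ^ 2"
    by (auto simp: \<eta>_def field_simps power2_eq_square power4_eq_xxxx power_one_over)
  define K where "K = (1 + \<eta>) * R ^ 4 + (3 + 16 / \<eta>) * CD"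
  have "(\<integral>\<omega>. V (Suc k) \<omega> ^ 4 \<partial>M) \<le> \<theta> ^ 2 * (\<integral>\<omega>. V k \<omega> ^ 4 \<partial>M) + K * real (Suc k) ^ 2" for k
  proof -
    have "(\<integral>\<omega>. V (Suc k) \<omega> ^ 4 \<partial>M)
        \<le> (1 + \<eta>) * (\<theta> ^ 4 * (\<integral>\<omega>. V k \<omega> ^ 4 \<partial>M) + R ^ 4) + (3 + 16 / \<eta>) * (CD * real (Suc k) ^ 2)"
    proof -
      have "(1 + \<eta>) * (\<integral>\<omega>. A (Suc k) \<omega> ^ 4 \<partial>M) \<le> (1 + \<eta>) * (\<theta> ^ 4 * (\<integral>\<omega>. V k \<omega> ^ 4 \<partial>M) + R ^ 4)"
        using fourth_moment_A_contraction[of k] \<eta>(1) unfolding \<theta>_def R_def by (intro mult_left_mono) auto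
      moreover have "(3 + 16 / \<eta>) * (\<integral>\<omega>. D (Suc k) \<omega> ^ 4 \<partial>M) \<le> (3 + 16 / \<eta>) * (CD * real (Suc k) ^ 2)"
        using CD(2)[of "Suc k"] \<eta>(1) by (intro mult_left_mono) auto
      ultimately show ?thesis using fourth_moment_V_le[OF \<eta>(1), of k] by linarith
    qed
    moreover have "(1 + \<eta>) * R ^ 4 * 1 \<le> (1 + \<eta>) * R ^ 4 * real (Suc k) ^ 2"
      using \<eta>(1) by (intro mult_left_mono) auto
    moreover have "(1 + \<eta>) * (\<theta> ^ 4 * x) = \<theta> ^ 2 * x" for x
      using \<eta>(2) by (metis mult.assoc)
    ultimately show ?thesis by (simp add: K_def distrib_left distrib_right)
  qed
  moreover have "0 \<le> K" using \<eta>(1) CD(1) by (simp add: K_def)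
  ultimately show ?thesis unfolding \<theta>_def by blast
qed

lemma fourth_moment_V: "\<exists>C\<ge>0. \<forall>k. (\<integral>\<omega>. V k \<omega> ^ 4 \<partial>M) \<le> C * real k ^ 2"
proof -
  obtain K where K: "0 \<le> K" "\<And>k. (\<integral>\<omega>. V (Suc k) \<omega> ^ 4 \<partial>M)
      \<le> ((1 + \<bar>lam\<bar>) / 2) ^ 2 * (\<integral>\<omega>. V k \<omega> ^ 4 \<partial>M) + K * real (Suc k) ^ 2"
    using fourth_moment_V_step by blast
  have t: "0 \<le> (1 + \<bar>lam\<bar>) / 2" "(1 + \<bar>lam\<bar>) / 2 < 1" using abs_lam_less_1 by auto
  then have q: "0 \<le> ((1 + \<bar>lam\<bar>) / 2) ^ 2" "((1 + \<bar>lam\<bar>) / 2) ^ 2 < 1"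
    using power_strict_mono[OF t(2) t(1), of 2] by auto
  have "(\<integral>\<omega>. V k \<omega> ^ 4 \<partial>M) \<le> K / (1 - ((1 + \<bar>lam\<bar>) / 2) ^ 2) * real k ^ 2" for k
    by (rule quadratic_bound_of_contraction[OF _ q K]) simp
  moreover have "0 \<le> K / (1 - ((1 + \<bar>lam\<bar>) / 2) ^ 2)" using K(1) q(2) by simp
  ultimately show ?thesis by blast
qed

lemma second_moment_V: "\<exists>C\<ge>0. \<forall>k. (\<integral>\<omega>. V k \<omega> ^ 2 \<partial>M) \<le> C * real k"
proof -
  obtain C where C: "0 \<le> C" "\<And>k. (\<integral>\<omega>. V k \<omega> ^ 4 \<partial>M) \<le> C * real k ^ 2"
    using fourth_moment_V by blast
  have "(\<integral>\<omega>. V k \<omega> ^ 2 \<partial>M) \<le> (C + 1) / 2 * real k" for k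
  proof (cases "k = 0")
    case False
    then have k: "0 < real k" by simp
    note int = L4_integrable[OF L4_V[of k]]
    have "(\<integral>\<omega>. V k \<omega> ^ 2 \<partial>M) \<le> (\<integral>\<omega>. V k \<omega> ^ 4 / (2 * real k) + real k / 2 \<partial>M)"
    proof (rule integral_mono)
      fix \<omega>
      have "2 * real k * V k \<omega> ^ 2 \<le> V k \<omega> ^ 4 + real k ^ 2"
        using zero_le_power2[of "V k \<omega> ^ 2 - real k"] by (simp add: power2_eq_square power4_eq_xxxx algebra_simps)
      then show "V k \<omega> ^ 2 \<le> V k \<omega> ^ 4 / (2 * real k) + real k / 2"
        using k by (simp add: field_simps power2_eq_square)
    qed (use int in auto)
    also have "\<dots> \<le> C * real k ^ 2 / (2 * real k) + real k / 2"
      using int C(2)[of k] k by (simp add: prob_space divide_right_mono)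
    also have "\<dots> = (C + 1) / 2 * real k"
      using k by (simp add: field_simps power2_eq_square)
    finally show ?thesis .
  qed simp
  then show ?thesis using C(1) by (intro exI[of _ "(C + 1) / 2"]) auto
qed

lemma fourth_moment_A: "\<exists>C\<ge>0. \<forall>l\<ge>1. (\<integral>\<omega>. A l \<omega> ^ 4 \<partial>M) \<le> C * real l ^ 2"
proof -
  obtain C where C: "0 \<le> C" "\<And>k. (\<integral>\<omega>. V k \<omega> ^ 4 \<partial>M) \<le> C * real k ^ 2"
    using fourth_moment_V by blast
  define C' where "C' = 8 * (lam ^ 4 * C + dif_mean_eps ^ 4)"
  have "(\<integral>\<omega>. A l \<omega> ^ 4 \<partial>M) \<le> C' * real l ^ 2" if "1 \<le> l" for l
  proof -
    note int = L4_integrable(3)[OF L4_V[of "l - 1"]]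
    have "(\<integral>\<omega>. A l \<omega> ^ 4 \<partial>M) \<le> (\<integral>\<omega>. 8 * (lam ^ 4 * V (l - 1) \<omega> ^ 4 + dif_mean_eps ^ 4) \<partial>M)"
      using power4_add_le[of "lam * V (l - 1) _" dif_mean_eps] L4_integrable(3)[OF L4_A] int
      by (intro integral_mono) (auto simp: A_def power_mult_distrib)
    also have "\<dots> \<le> 8 * (lam ^ 4 * (C * real (l - 1) ^ 2) + dif_mean_eps ^ 4)"
      using int C(2)[of "l - 1"] by (simp add: prob_space mult_left_mono)
    also have "\<dots> \<le> C' * real l ^ 2"
    proof -
      have a: "real (l - 1) ^ 2 \<le> real l ^ 2" and b: "1 \<le> real l ^ 2"
        using that by (auto intro: power_mono)
      have "lam ^ 4 * (C * real (l - 1) ^ 2) \<le> lam ^ 4 * (C * real l ^ 2)"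
        using a C(1) by (intro mult_left_mono) auto
      moreover have "dif_mean_eps ^ 4 \<le> dif_mean_eps ^ 4 * real l ^ 2"
        using mult_left_mono[OF b, of "dif_mean_eps ^ 4"] by simp
      moreover have "C' * real l ^ 2 = 8 * (lam ^ 4 * (C * real l ^ 2) + dif_mean_eps ^ 4 * real l ^ 2)"
        by (simp add: C'_def algebra_simps)
      ultimately show ?thesis by argo
    qed
    finally show ?thesis .
  qed
  moreover have "0 \<le> C'" using C(1) by (simp add: C'_def)
  ultimately show ?thesis by blast
qed

lemma second_moment_dif_cvar:
  "\<exists>C\<ge>0. \<forall>l\<ge>1. (\<integral>\<omega>. dif_cvar (X (l - 1) \<omega>) ^ 2 \<partial>M) \<le> C * real l ^ 2"
proof -
  define S where "S = dif_var1 + dif_var2 + dif_var_eps"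
  have cvar: "0 \<le> dif_cvar x" "dif_cvar x \<le> S * (tot x + 1)" for x
  proof -
    show "0 \<le> dif_cvar x" using dif_vars_nonneg by (simp add: dif_cvar_def)
    have "real (x$1) \<le> tot x + 1" "real (x$2) \<le> tot x + 1" "1 \<le> tot x + 1" by (auto simp: tot_def)
    then have "real (x$1) * dif_var1 + real (x$2) * dif_var2 + 1 * dif_var_eps
        \<le> (tot x + 1) * dif_var1 + (tot x + 1) * dif_var2 + (tot x + 1) * dif_var_eps"
      using dif_vars_nonneg by (intro add_mono mult_right_mono) auto
    then show "dif_cvar x \<le> S * (tot x + 1)" by (simp add: dif_cvar_def S_def algebra_simps)
  qed
  have "dif_cvar x ^ 2 \<le> S ^ 2 * (tot x + 1) ^ 2" for x
    using power_mono[OF cvar(2)[of x] cvar(1)[of x], of 2] by (simp add: power_mult_distrib)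
  then obtain C where C: "0 \<le> C" "\<And>l k. (\<integral>\<omega>. (\<lambda>_ x. dif_cvar x ^ 2) l (X k \<omega>) \<partial>M) \<le> C * (real k + 1) ^ 2"
    using integral_bounded_by_tot_sq[of "\<lambda>_ x. dif_cvar x ^ 2" "S ^ 2"] by auto
  have "(\<integral>\<omega>. dif_cvar (X (l - 1) \<omega>) ^ 2 \<partial>M) \<le> C * real l ^ 2" if "1 \<le> l" for l
    using C(2)[of "l - 1"] that by (simp add: of_nat_diff)
  then show ?thesis using C(1) by blast
qed

subsection \<open>The martingale decomposition\<close>

definition cross_term :: "nat \<Rightarrow> 'a \<Rightarrow> real" where
  "cross_term k \<omega> = A k \<omega> * D k \<omega>"

definition sq_term :: "nat \<Rightarrow> 'a \<Rightarrow> real" where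
  "sq_term k \<omega> = D k \<omega> ^ 2 - dif_cvar (X (k - 1) \<omega>)"

lemma integrable_cross_term_mult: "integrable M (\<lambda>\<omega>. cross_term k \<omega> * cross_term l \<omega>)"
  using L4_integrable_mult4[OF L4_A L4_D L4_A L4_D, of k k l l] by (simp add: cross_term_def mult.assoc)

lemma integrable_sq_term_mult: "integrable M (\<lambda>\<omega>. sq_term k \<omega> * sq_term l \<omega>)"
proof -
  let ?c = "\<lambda>k \<omega>. dif_cvar (X (k - 1) \<omega>)"
  have "sq_term k \<omega> * sq_term l \<omega> = D k \<omega> * D k \<omega> * D l \<omega> * D l \<omega> - D k \<omega> * D k \<omega> * ?c l \<omega> * 1
     - (?c k \<omega> * D l \<omega> * D l \<omega> * 1 - ?c k \<omega> * ?c l \<omega> * 1 * 1)" for \<omega>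
    by (simp add: sq_term_def power2_eq_square algebra_simps)
  moreover note L4_integrable_mult4[OF L4_D L4_D L4_D L4_D, of k k l l]
    L4_integrable_mult4[OF L4_D L4_D L4_dif_cvar L4_const, of k k "l - 1" 1]
    L4_integrable_mult4[OF L4_dif_cvar L4_D L4_D L4_const, of "k - 1" l l 1]
    L4_integrable_mult4[OF L4_dif_cvar L4_dif_cvar L4_const L4_const, of "k - 1" "l - 1" 1 1]
  ultimately show ?thesis
    by (simp only:) (intro Bochner_Integration.integrable_diff)
qed

lemma cross_term_orthogonal:
  assumes "1 \<le> k" "k < l"
  shows "(\<integral>\<omega>. cross_term k \<omega> * cross_term l \<omega> \<partial>M) = 0"
proof -
  define F where "F x y z = (lam * dif x + dif_mean_eps) * (dif y - (lam * dif x + dif_mean_eps)) * (lam * dif z + dif_mean_eps)"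
    for x y z
  have "cross_term k \<omega> * cross_term l \<omega> = F (X (k - 1) \<omega>) (X k \<omega>) (X (l - 1) \<omega>) * D l \<omega>" for \<omega>
    by (simp add: cross_term_def F_def A_def V_def D_eq[of k] algebra_simps)
  then show ?thesis
    using integral_history_mult_D[of l "k - 1" k "l - 1" F] integrable_cross_term_mult[of k l] assms by simp
qed

lemma sq_term_orthogonal:
  assumes "1 \<le> k" "k < l"
  shows "(\<integral>\<omega>. sq_term k \<omega> * sq_term l \<omega> \<partial>M) = 0"
proof -
  define F where "F x y (z :: nat^2) = (dif y - (lam * dif x + dif_mean_eps))^2 - dif_cvar x" for x y z
  have "sq_term k \<omega> * sq_term l \<omega> = F (X (k - 1) \<omega>) (X k \<omega>) (X k \<omega>) * (D l \<omega> ^ 2 - dif_cvar (X (l - 1) \<omega>))" for \<omega>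
    by (simp add: sq_term_def F_def D_eq[of k])
  then show ?thesis
    using integral_history_mult_D_sq[of l "k - 1" k k F] integrable_sq_term_mult[of k l] assms by simp
qed

lemma second_moment_bigO_cross_sum: "second_moment_bigO (\<lambda>n \<omega>. \<Sum>k=1..n. cross_term k \<omega>) 3"
proof -
  obtain CA where CA: "0 \<le> CA" "\<And>l. 1 \<le> l \<Longrightarrow> (\<integral>\<omega>. A l \<omega> ^ 4 \<partial>M) \<le> CA * real l ^ 2"
    using fourth_moment_A by blast
  obtain CD where CD: "0 \<le> CD" "\<And>l. 1 \<le> l \<Longrightarrow> (\<integral>\<omega>. D l \<omega> ^ 4 \<partial>M) \<le> CD * real l ^ 2"
    using fourth_moment_D by blast
  have "(\<integral>\<omega>. cross_term k \<omega> ^ 2 \<partial>M) \<le> (CA + CD) / 2 * real k ^ 2" if "1 \<le> k" for k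
  proof -
    note int = L4_integrable(3)[OF L4_A[of k]] L4_integrable(3)[OF L4_D[of k]]
    have "(\<integral>\<omega>. cross_term k \<omega> ^ 2 \<partial>M) \<le> (\<integral>\<omega>. (A k \<omega> ^ 4 + D k \<omega> ^ 4) / 2 \<partial>M)"
    proof (rule integral_mono)
      fix \<omega>
      show "cross_term k \<omega> ^ 2 \<le> (A k \<omega> ^ 4 + D k \<omega> ^ 4) / 2"
        using abs_mult_le_half_squares[of "A k \<omega> ^ 2" "D k \<omega> ^ 2"]
        by (simp add: cross_term_def power_mult_distrib flip: power_mult)
    qed (use int integrable_cross_term_mult[of k k] in \<open>auto simp: power2_eq_square\<close>)
    also have "\<dots> \<le> (CA * real k ^ 2 + CD * real k ^ 2) / 2"
      using int CA(2)[OF that] CD(2)[OF that] by simp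
    finally show ?thesis by (simp add: algebra_simps)
  qed
  moreover have "cross_term k \<in> borel_measurable M" for k
    using L4_measurable[OF L4_A] L4_measurable[OF L4_D] by (simp add: cross_term_def[abs_def])
  ultimately have "second_moment_bigO (\<lambda>n \<omega>. \<Sum>k=1..n. cross_term k \<omega>) (Suc 2)"
    using CA(1) CD(1)
    by (intro second_moment_bigO_orthogonal_sum[where C = "(CA + CD) / 2"] integrable_cross_term_mult
        cross_term_orthogonal) auto
  then show ?thesis by (simp add: numeral_3_eq_3)
qed

lemma second_moment_bigO_sq_sum: "second_moment_bigO (\<lambda>n \<omega>. \<Sum>k=1..n. sq_term k \<omega>) 3"
proof -
  obtain CD where CD: "0 \<le> CD" "\<And>l. 1 \<le> l \<Longrightarrow> (\<integral>\<omega>. D l \<omega> ^ 4 \<partial>M) \<le> CD * real l ^ 2"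
    using fourth_moment_D by blast
  obtain CS where CS: "0 \<le> CS" "\<And>l. 1 \<le> l \<Longrightarrow> (\<integral>\<omega>. dif_cvar (X (l - 1) \<omega>) ^ 2 \<partial>M) \<le> CS * real l ^ 2"
    using second_moment_dif_cvar by blast
  have "(\<integral>\<omega>. sq_term k \<omega> ^ 2 \<partial>M) \<le> (2 * CD + 2 * CS) * real k ^ 2" if "1 \<le> k" for k
  proof -
    note int = L4_integrable(3)[OF L4_D[of k]] L4_integrable(2)[OF L4_dif_cvar[of "k - 1"]]
    have "(\<integral>\<omega>. sq_term k \<omega> ^ 2 \<partial>M) \<le> (\<integral>\<omega>. 2 * D k \<omega> ^ 4 + 2 * dif_cvar (X (k - 1) \<omega>) ^ 2 \<partial>M)"
    proof (rule integral_mono)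
      fix \<omega>
      show "sq_term k \<omega> ^ 2 \<le> 2 * D k \<omega> ^ 4 + 2 * dif_cvar (X (k - 1) \<omega>) ^ 2"
        using zero_le_power2[of "D k \<omega> ^ 2 + dif_cvar (X (k - 1) \<omega>)"]
        by (simp add: sq_term_def power2_eq_square power4_eq_xxxx algebra_simps)
    qed (use int integrable_sq_term_mult[of k k] in \<open>auto simp: power2_eq_square\<close>)
    also have "\<dots> \<le> 2 * (CD * real k ^ 2) + 2 * (CS * real k ^ 2)"
      using int CD(2)[OF that] CS(2)[OF that] by simp
    finally show ?thesis by (simp add: algebra_simps)
  qed
  moreover have "sq_term k \<in> borel_measurable M" for k
    using L4_measurable[OF L4_D] L4_measurable[OF L4_dif_cvar] by (simp add: sq_term_def[abs_def])
  ultimately have "second_moment_bigO (\<lambda>n \<omega>. \<Sum>k=1..n. sq_term k \<omega>) (Suc 2)"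
    using CD(1) CS(1)
    by (intro second_moment_bigO_orthogonal_sum[where C = "2 * CD + 2 * CS"] integrable_sq_term_mult
        sq_term_orthogonal) auto
  then show ?thesis by (simp add: numeral_3_eq_3)
qed

lemma V_sq_decomposition:
  assumes "1 \<le> k"
  shows "V k \<omega> ^ 2 = lam^2 * V (k - 1) \<omega> ^ 2 + (2 * lam * dif_mean_eps + (dif_var1 - dif_var2) / 2) * V (k - 1) \<omega>
    + (dif_mean_eps^2 + dif_var_eps) + 2 * cross_term k \<omega> + sq_term k \<omega>
    + (dif_var1 + dif_var2) / 2 * U (k - 1) \<omega>"
proof -
  have "V k \<omega> ^ 2 = A k \<omega> ^ 2 + 2 * cross_term k \<omega> + sq_term k \<omega> + dif_cvar (X (k - 1) \<omega>)"
    by (simp add: cross_term_def sq_term_def D_def power2_eq_square algebra_simps)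
  then show ?thesis
    by (simp add: dif_cvar_tot_dif A_def U_def V_def power2_eq_square algebra_simps)
qed

text \<open>\<open>Z n\<close> is the bracket of the main theorem; its constant is identified by
  \<open>mean_variance_quadratic_form\<close> and \<open>one_minus_lam_sq\<close>.\<close>

definition Z :: "nat \<Rightarrow> 'a \<Rightarrow> real" where
  "Z n \<omega> = (\<Sum>k=1..n. V k \<omega> ^ 2) - (dif_var1 + dif_var2) / 2 / (1 - lam^2) * (\<Sum>k=1..n. U (k - 1) \<omega>)"

lemma Z_decomposition:
  "(1 - lam^2) * Z n \<omega> = - (lam^2 * V n \<omega> ^ 2)
    + (2 * lam * dif_mean_eps + (dif_var1 - dif_var2) / 2) * (\<Sum>k<n. V k \<omega>)
    + real n * (dif_mean_eps^2 + dif_var_eps) + 2 * (\<Sum>k=1..n. cross_term k \<omega>) + (\<Sum>k=1..n. sq_term k \<omega>)"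
proof -
  define R where "R = (2 * lam * dif_mean_eps + (dif_var1 - dif_var2) / 2) * (\<Sum>k<n. V k \<omega>)
    + real n * (dif_mean_eps^2 + dif_var_eps) + 2 * (\<Sum>k=1..n. cross_term k \<omega>) + (\<Sum>k=1..n. sq_term k \<omega>)"
  define S where "S = (\<Sum>k=1..n. V k \<omega> ^ 2)"
  define W where "W = (\<Sum>k=1..n. U (k - 1) \<omega>)"
  have "(\<Sum>k=1..n. V (k - 1) \<omega> ^ 2) = S - V n \<omega> ^ 2"
    unfolding S_def sum_shift_down[of "\<lambda>k. V k \<omega> ^ 2"] by (induction n) simp_all
  moreover have "S = (\<Sum>k=1..n. lam^2 * V (k - 1) \<omega> ^ 2
      + (2 * lam * dif_mean_eps + (dif_var1 - dif_var2) / 2) * V (k - 1) \<omega>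
      + (dif_mean_eps^2 + dif_var_eps) + 2 * cross_term k \<omega> + sq_term k \<omega>
      + (dif_var1 + dif_var2) / 2 * U (k - 1) \<omega>)"
    unfolding S_def by (rule sum.cong) (simp_all add: V_sq_decomposition)
  ultimately have "S = lam^2 * (S - V n \<omega> ^ 2) + R + (dif_var1 + dif_var2) / 2 * W"
    by (simp only: sum.distrib sum_distrib_left[symmetric] sum_shift_down[of "\<lambda>k. V k \<omega>"] W_def R_def)
       (simp add: distrib_left)
  moreover have "(1 - lam^2) * Z n \<omega> = S - lam^2 * S - (dif_var1 + dif_var2) / 2 * W"
  proof -
    have "1 - lam^2 \<noteq> 0" using one_minus_lam_sq ab by simp
    then have "(1 - lam^2) * ((dif_var1 + dif_var2) / 2 / (1 - lam^2) * W) = (dif_var1 + dif_var2) / 2 * W"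
      by (simp add: field_simps)
    then show ?thesis
      unfolding Z_def S_def[symmetric] W_def[symmetric] by (simp add: right_diff_distrib left_diff_distrib)
  qed
  ultimately show ?thesis unfolding R_def by (simp add: algebra_simps)
qed

lemma second_moment_bigO_V_sq: "second_moment_bigO (\<lambda>n \<omega>. V n \<omega> ^ 2) 2"
proof -
  obtain C where C: "0 \<le> C" "\<And>k. (\<integral>\<omega>. V k \<omega> ^ 4 \<partial>M) \<le> C * real k ^ 2"
    using fourth_moment_V by blast
  show ?thesis
    using C L4_integrable(3)[OF L4_V] L4_measurable[OF L4_V]
    by (intro second_moment_bigOI[where C = C]) (auto simp flip: power_mult)
qed

lemma second_moment_bigO_Z: "second_moment_bigO Z 3"
proof -
  obtain CV where CV: "0 \<le> CV" "\<And>k. (\<integral>\<omega>. V k \<omega> ^ 2 \<partial>M) \<le> CV * real k ^ 1"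
    using second_moment_V by auto
  have sum_V: "second_moment_bigO (\<lambda>n \<omega>. \<Sum>k<n. V k \<omega>) 3"
    using second_moment_bigO_sum[of V, OF _ _ CV(2) CV(1)] L4_measurable[OF L4_V] L4_integrable(2)[OF L4_V]
    by (simp add: numeral_3_eq_3)
  define K where "K = dif_mean_eps^2 + dif_var_eps"
  have const: "second_moment_bigO (\<lambda>n (\<omega>::'a). real n * K) 3"
  proof (rule second_moment_bigOI[where C = "K^2"])
    fix n :: nat assume "1 \<le> n"
    then have "real n ^ 2 \<le> real n ^ 3" by (intro power_increasing) auto
    then show "(\<integral>\<omega>. (real n * K) ^ 2 \<partial>M) \<le> K^2 * real n ^ 3"
      by (simp add: power_mult_distrib prob_space mult.commute mult_left_mono)
  qed simp_all
  have "second_moment_bigO (\<lambda>n \<omega>. - (lam^2 * V n \<omega> ^ 2)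
      + (2 * lam * dif_mean_eps + (dif_var1 - dif_var2) / 2) * (\<Sum>k<n. V k \<omega>)
      + real n * K + 2 * (\<Sum>k=1..n. cross_term k \<omega>) + (\<Sum>k=1..n. sq_term k \<omega>)) 3"
    using second_moment_bigO_mono[OF second_moment_bigO_cmult[OF second_moment_bigO_V_sq, of "- (lam^2)"]]
    by (intro second_moment_bigO_add second_moment_bigO_cmult sum_V const second_moment_bigO_cross_sum
        second_moment_bigO_sq_sum) auto
  then have "second_moment_bigO (\<lambda>n \<omega>. 1 / (1 - lam^2) * ((1 - lam^2) * Z n \<omega>)) 3"
    unfolding Z_decomposition K_def by (rule second_moment_bigO_cmult)
  moreover have "1 - lam^2 \<noteq> 0" using one_minus_lam_sq ab by simp
  ultimately show ?thesis by simp
qed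

lemma Z_conv_prob_zero: "conv_prob_zero M (\<lambda>n \<omega>. 1 / real n ^ 2 * Z n \<omega>)"
  by (rule second_moment_bigO_conv_prob_zero[OF second_moment_bigO_Z]) simp

lemma mean_variance_quadratic_form:
  "(((1/2) *\<^sub>R (var_mat M (\<lambda>\<omega>. vreal (xi1 1 1 \<omega>)) + var_mat M (\<lambda>\<omega>. vreal (xi2 1 1 \<omega>))))
     *v vector [1, -1]) \<bullet> vector [1, -1] = (dif_var1 + dif_var2) / 2"
proof -
  have split: "(((1/2) *\<^sub>R (P + Q)) *v vector [1, -1]) \<bullet> vector [1, -1]
      = ((P *v vector [1, -1]) \<bullet> vector [1, -1] + (Q *v vector [1, -1]) \<bullet> vector [1, -1]) / 2"
    for P Q :: "real^2^2"
    unfolding quadratic_form_diagonal_difference by (simp add: field_simps)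
  show ?thesis
    unfolding split var_mat_quadratic_form[OF measurable_xi1[OF order_refl order_refl] mom1]
      var_mat_quadratic_form[OF measurable_xi2[OF order_refl order_refl] mom2]
    unfolding mean1 mean2 by (simp add: dif_var1_def dif_var2_def lam_def algebra_simps)
qed

end

theorem lemmaA2:
  fixes M :: "'a measure"
    and xi1 xi2 :: "nat \<Rightarrow> nat \<Rightarrow> 'a \<Rightarrow> nat^2"
    and eps :: "nat \<Rightarrow> 'a \<Rightarrow> nat^2"
    and \<alpha> \<beta> :: real
  assumes "prob_space M"
    and indep: "prob_space.indep_vars M (\<lambda>_. count_space UNIV) (noise_family xi1 xi2 eps) noise_indices"
    and id1: "\<And>k j. k \<ge> 1 \<Longrightarrow> j \<ge> 1 \<Longrightarrow>
                distr M (count_space UNIV) (xi1 k j) = distr M (count_space UNIV) (xi1 1 1)"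
    and id2: "\<And>k j. k \<ge> 1 \<Longrightarrow> j \<ge> 1 \<Longrightarrow>
                distr M (count_space UNIV) (xi2 k j) = distr M (count_space UNIV) (xi2 1 1)"
    and ideps: "\<And>k. k \<ge> 1 \<Longrightarrow>
                distr M (count_space UNIV) (eps k) = distr M (count_space UNIV) (eps 1)"
    and ab: "0 < \<alpha>" "\<alpha> < 1" "0 < \<beta>" "\<beta> < 1" "\<alpha> + \<beta> = 1"
    and mean1: "integral\<^sup>L M (\<lambda>\<omega>. vreal (xi1 1 1 \<omega>)) = vector [\<alpha>, \<beta>]"
    and mean2: "integral\<^sup>L M (\<lambda>\<omega>. vreal (xi2 1 1 \<omega>)) = vector [\<beta>, \<alpha>]"
    and mom1: "integrable M (\<lambda>\<omega>. norm (vreal (xi1 1 1 \<omega>)) ^ 8)"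
    and mom2: "integrable M (\<lambda>\<omega>. norm (vreal (xi2 1 1 \<omega>)) ^ 8)"
    and mom3: "integrable M (\<lambda>\<omega>. norm (vreal (eps 1 \<omega>)) ^ 8)"
    and epsnz: "integral\<^sup>L M (\<lambda>\<omega>. vreal (eps 1 \<omega>)) \<noteq> 0"
  shows "conv_prob_zero M (\<lambda>n \<omega>.
     (1 / (real n)^2) *
       ((\<Sum>k=1..n. (real (bpi xi1 xi2 eps k \<omega> $ 1) - real (bpi xi1 xi2 eps k \<omega> $ 2))^2)
        - ((((1/2) *\<^sub>R (var_mat M (\<lambda>\<omega>. vreal (xi1 1 1 \<omega>)) + var_mat M (\<lambda>\<omega>. vreal (xi2 1 1 \<omega>))))
              *v vector [1, -1]) \<bullet> vector [1, -1]) / (4 * \<alpha> * \<beta>)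
          * (\<Sum>k=1..n. real (bpi xi1 xi2 eps (k - 1) \<omega> $ 1) + real (bpi xi1 xi2 eps (k - 1) \<omega> $ 2))))"
proof -
  interpret two_type_bpi M xi1 xi2 eps \<alpha> \<beta>
    unfolding two_type_bpi_def two_type_bpi_axioms_def using assms by blast
  show ?thesis
    unfolding mean_variance_quadratic_form one_minus_lam_sq[symmetric]
    using Z_conv_prob_zero by (simp add: Z_def V_def U_def dif_def tot_def)
qed

end
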